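(* Let $R>0$ and let $V\in L^\infty(\mathbb{R};\mathbb{R})$ with $V(x)\to0$ as $|x|\to\infty$ satisfy $$\int_{-R}^R V(x)\,dx<0\quad\text{and}\quad V\le0\ \text{a.e. outside }[-R,R].$$ For $\beta>0$ let $K_\beta=(-\partial_x^2+\beta)^{-1}V:H^1(\mathbb{R})\to H^1(\mathbb{R})$ (compact, symmetric for $\langle u,v\rangle_\beta=\langle u',v'\rangle_{L^2}+\beta\langle u,v\rangle_{L^2}$), and let $\mu_1(\beta)\le\mu_2(\beta)\le\cdots<0$ be its negative eigenvalues counted with multiplicity. Then $K_\beta$ has at least one negative eigenvalue for every $\beta>0$, and $\mu_1(0_+):=\lim_{\beta\to0^+}\mu_1(\beta)=-\infty$. *)

theory Defs
  imports "HOL-Analysis.Analysis"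
begin

text \<open>Membership in H^1(R), at the level of representatives: u is (locally) absolutely
  continuous with a.e. derivative u', and both u and u' are square integrable.\<close>
definition H1 :: "(real \<Rightarrow> real) \<Rightarrow> (real \<Rightarrow> real) \<Rightarrow> bool" where
  "H1 u u' \<longleftrightarrow> u \<in> borel_measurable lborel \<and> u' \<in> borel_measurable lborel
     \<and> integrable lborel (\<lambda>x. (u x)\<^sup>2) \<and> integrable lborel (\<lambda>x. (u' x)\<^sup>2)
     \<and> (\<forall>x. u x = u 0 + (LBINT t=0..x. u' t))"

text \<open>mu is an eigenvalue of K_beta = (-d^2/dx^2 + beta)^{-1} V on H^1 with the inner product
  <u,v>_beta = <u',v'> + beta <u,v>.  By definition of the resolvent,
  <K_beta u, phi>_beta = integral of V u phi, so K_beta u = mu u iff for all phi in H^1: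
  integral V u phi = mu <u, phi>_beta.\<close>
definition K_eigenvalue :: "(real \<Rightarrow> real) \<Rightarrow> real \<Rightarrow> real \<Rightarrow> bool" where
  "K_eigenvalue V \<beta> \<mu> \<longleftrightarrow>
     (\<exists>u u'. H1 u u' \<and> (\<integral>x. (u x)\<^sup>2 \<partial>lborel) > 0 \<and>
        (\<forall>\<phi> \<phi>'. H1 \<phi> \<phi>' \<longrightarrow>
            (\<integral>x. V x * u x * \<phi> x \<partial>lborel)
              = \<mu> * ((\<integral>x. u' x * \<phi>' x \<partial>lborel) + \<beta> * (\<integral>x. u x * \<phi> x \<partial>lborel))))"

definition mu1 :: "(real \<Rightarrow> real) \<Rightarrow> real \<Rightarrow> real" where
  "mu1 V \<beta> = Inf {\<mu>. \<mu> < 0 \<and> K_eigenvalue V \<beta> \<mu>}"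

end

theory Submission
  imports Defs "HOL-Complex_Analysis.Great_Picard"
begin

text \<open>For fixed \<open>\<beta> > 0\<close>, \<open>K\<^sub>\<beta>\<close> has the eigenvalue \<open>\<mu> \<noteq> 0\<close> iff the quadratic form
  \<open>\<integral>V u\<^sup>2 - \<mu> (\<parallel>u'\<parallel>\<^sup>2 + \<beta>\<parallel>u\<parallel>\<^sup>2)\<close> has a nonzero critical point on \<open>H\<^sup>1\<close>. Hence if the infimum \<open>m\<close>
  of the Rayleigh quotient \<open>\<integral>V u\<^sup>2 / (\<parallel>u'\<parallel>\<^sup>2 + \<beta>\<parallel>u\<parallel>\<^sup>2)\<close> is negative and attained, \<open>m\<close> is the
  lowest eigenvalue (Euler--Lagrange equation). A plateau function equal to \<open>1\<close> on \<open>[-R, R]\<close>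
  with linear ramps of width \<open>b\<close> has quotient at most \<open>\<integral>\<^sub>-\<^sub>R\<^sup>R V / (2/b + 2\<beta>(R + b)) < 0\<close>, and
  \<open>b = \<beta>\<^sup>-\<^sup>1\<^sup>/\<^sup>2\<close> gives \<open>m \<le> -c/\<surd>\<beta> \<rightarrow> -\<infinity>\<close>.

  The infimum is attained: a normalised minimising sequence is uniformly bounded and
  \<open>1/2\<close>-Hoelder, so a subsequence converges pointwise, and because \<open>m < 0\<close> and \<open>V\<close> decays at
  infinity it is even Cauchy in the energy norm; its limit in \<open>H\<^sup>1\<close> attains \<open>m\<close>.\<close>

section \<open>Square-integrable functions\<close>

definition L2 :: "(real \<Rightarrow> real) \<Rightarrow> bool" where
  "L2 f \<longleftrightarrow> f \<in> borel_measurable lborel \<and> integrable lborel (\<lambda>x. (f x)\<^sup>2)"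

definition L2_inner :: "(real \<Rightarrow> real) \<Rightarrow> (real \<Rightarrow> real) \<Rightarrow> real" where
  "L2_inner f g = (\<integral>x. f x * g x \<partial>lborel)"

definition L2_Cauchy :: "(nat \<Rightarrow> real \<Rightarrow> real) \<Rightarrow> bool" where
  "L2_Cauchy f \<longleftrightarrow>
     (\<forall>e>0. \<exists>N. \<forall>n\<ge>N. \<forall>k\<ge>N. L2_inner (\<lambda>x. f n x - f k x) (\<lambda>x. f n x - f k x) < e)"

lemma L2_integrable_mult:
  assumes "L2 f" "L2 g" shows "integrable lborel (\<lambda>x. f x * g x)"
proof (rule Bochner_Integration.integrable_bound)
  show "integrable lborel (\<lambda>x. (f x)\<^sup>2 + (g x)\<^sup>2)" using assms by (simp add: L2_def)
  show "(\<lambda>x. f x * g x) \<in> borel_measurable lborel"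
    using assms by (auto simp: L2_def)
  have "\<bar>a * b\<bar> \<le> a\<^sup>2 + b\<^sup>2" for a b :: real
  proof -
    have "2 * \<bar>a\<bar> * \<bar>b\<bar> \<le> \<bar>a\<bar>\<^sup>2 + \<bar>b\<bar>\<^sup>2" by (rule sum_squares_bound)
    moreover have "0 \<le> \<bar>a\<bar> * \<bar>b\<bar>" by simp
    ultimately show ?thesis by (simp only: abs_mult power2_abs)
  qed
  then show "AE x in lborel. norm (f x * g x) \<le> norm ((f x)\<^sup>2 + (g x)\<^sup>2)"
    by simp
qed

lemma L2_lincomb:
  assumes "L2 f" "L2 g" shows "L2 (\<lambda>x. a * f x + b * g x)"
proof -
  have [measurable]: "f \<in> borel_measurable lborel" "g \<in> borel_measurable lborel"
    using assms by (auto simp: L2_def)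
  have "integrable lborel (\<lambda>x. a\<^sup>2 * (f x)\<^sup>2 + (2*a*b) * (f x * g x) + b\<^sup>2 * (g x)\<^sup>2)"
    using assms L2_integrable_mult[OF assms] by (auto simp: L2_def)
  moreover have "(\<lambda>x. a\<^sup>2 * (f x)\<^sup>2 + (2*a*b) * (f x * g x) + b\<^sup>2 * (g x)\<^sup>2) = (\<lambda>x. (a * f x + b * g x)\<^sup>2)"
    by (auto simp: power2_eq_square algebra_simps)
  ultimately show ?thesis by (simp add: L2_def)
qed

lemma L2_diff: "L2 f \<Longrightarrow> L2 g \<Longrightarrow> L2 (\<lambda>x. f x - g x)"
  using L2_lincomb[of f g 1 "-1"] by simp

lemma L2_inner_commute: "L2_inner f g = L2_inner g f"
  unfolding L2_inner_def by (simp add: mult.commute)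

lemma L2_inner_self: "L2_inner f f = (\<integral>x. (f x)\<^sup>2 \<partial>lborel)"
  unfolding L2_inner_def by (simp add: power2_eq_square)

lemma L2_inner_self_nonneg: "L2_inner f f \<ge> 0"
  unfolding L2_inner_self by simp

lemma L2_inner_lincomb_left:
  assumes "L2 f" "L2 g" "L2 h"
  shows "L2_inner (\<lambda>x. a * f x + b * g x) h = a * L2_inner f h + b * L2_inner g h"
proof -
  have "L2_inner (\<lambda>x. a * f x + b * g x) h = (\<integral>x. a * (f x * h x) + b * (g x * h x) \<partial>lborel)"
    unfolding L2_inner_def by (rule Bochner_Integration.integral_cong) (auto simp: algebra_simps)
  also have "\<dots> = a * L2_inner f h + b * L2_inner g h"
    using L2_integrable_mult[OF assms(1,3)] L2_integrable_mult[OF assms(2,3)]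
    by (simp add: L2_inner_def)
  finally show ?thesis .
qed

lemma L2_inner_self_add_mult:
  assumes "L2 f" "L2 g"
  shows "L2_inner (\<lambda>x. f x + t * g x) (\<lambda>x. f x + t * g x)
    = L2_inner f f + 2 * t * L2_inner f g + t\<^sup>2 * L2_inner g g"
proof -
  have L: "L2 (\<lambda>x. f x + t * g x)" using L2_lincomb[OF assms, of 1 t] by simp
  have "L2_inner (\<lambda>x. 1 * f x + t * g x) (\<lambda>x. f x + t * g x)
      = L2_inner (\<lambda>x. f x + t * g x) f + t * L2_inner (\<lambda>x. f x + t * g x) g"
    using L2_inner_lincomb_left[OF assms L, of 1 t] by (simp add: L2_inner_commute)
  also have "\<dots> = L2_inner f f + 2 * t * L2_inner f g + t\<^sup>2 * L2_inner g g"
    using L2_inner_lincomb_left[OF assms assms(1), of 1 t] L2_inner_lincomb_left[OF assms assms(2), of 1 t]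
      L2_inner_commute[of f g] by (simp add: power2_eq_square algebra_simps)
  finally show ?thesis by simp
qed

lemma L2_inner_self_scale: "L2_inner (\<lambda>x. c * f x) (\<lambda>x. c * f x) = c\<^sup>2 * L2_inner f f"
proof -
  have "L2_inner (\<lambda>x. c * f x) (\<lambda>x. c * f x) = (\<integral>x. c\<^sup>2 * (f x * f x) \<partial>lborel)"
    unfolding L2_inner_def by (rule Bochner_Integration.integral_cong) (auto simp: power2_eq_square)
  then show ?thesis by (simp add: L2_inner_def)
qed

lemma nonneg_quadratic_imp_sq_le:
  fixes a b c :: real
  assumes c: "c \<ge> 0" and nonneg: "\<And>t. 0 \<le> a + 2 * t * b + t\<^sup>2 * c"
  shows "b\<^sup>2 \<le> a * c"
proof (cases "c = 0")
  case True
  have "b = 0"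
  proof (rule ccontr)
    assume "b \<noteq> 0"
    then have "2 * (- (\<bar>a\<bar> + 1) / (2 * b)) * b = - (\<bar>a\<bar> + 1)" by simp
    then have "a + 2 * (- (\<bar>a\<bar> + 1) / (2 * b)) * b + 0 < 0" by linarith
    with nonneg[of "- (\<bar>a\<bar> + 1) / (2 * b)"] True show False by simp
  qed
  with True show ?thesis by simp
next
  case False
  with c have c: "c > 0" by simp
  have "0 \<le> a + 2 * (- b / c) * b + (- b / c)\<^sup>2 * c" by (rule nonneg)
  also have "\<dots> = a - b\<^sup>2 / c" using c by (simp add: field_simps power2_eq_square)
  finally show ?thesis using c by (simp add: field_simps)
qed

lemma L2_Cauchy_Schwarz:
  assumes "L2 f" "L2 g"
  shows "\<bar>L2_inner f g\<bar> \<le> sqrt (L2_inner f f * L2_inner g g)"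
proof -
  have "(L2_inner f g)\<^sup>2 \<le> L2_inner f f * L2_inner g g"
    using L2_inner_self_add_mult[OF assms] L2_inner_self_nonneg
    by (intro nonneg_quadratic_imp_sq_le) metis+
  then show ?thesis by (metis real_sqrt_abs real_sqrt_le_mono)
qed

section \<open>The space \<open>H\<^sup>1\<close>\<close>

lemma H1_L2: "H1 u u' \<Longrightarrow> L2 u" "H1 u u' \<Longrightarrow> L2 u'"
  unfolding H1_def L2_def by blast+

lemma H1I:
  assumes "L2 u" "L2 u'" "\<And>x. u x = u 0 + (LBINT t=0..x. u' t)"
  shows "H1 u u'"
  using assms unfolding H1_def L2_def by blast

lemma integrable_indicator_bounded:
  "bounded S \<Longrightarrow> S \<in> sets lborel \<Longrightarrow> integrable lborel (indicator S :: real \<Rightarrow> real)"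
  using emeasure_bounded_finite by (simp add: integrable_indicator_iff)

lemma L2_indicator_Ioo: "L2 (indicator {a<..<b} :: real \<Rightarrow> real)"
proof -
  have "(\<lambda>x. (indicator {a<..<b} x :: real)\<^sup>2) = indicator {a<..<b}"
    by (auto simp: indicator_def fun_eq_iff)
  then show ?thesis
    using integrable_indicator_bounded[of "{a<..<b}"] by (simp add: L2_def)
qed

lemma interval_integral_eq_L2_inner:
  fixes a b :: real
  shows "a \<le> b \<Longrightarrow> (LBINT t=a..b. h t) = L2_inner (indicator {a<..<b}) h"
  unfolding L2_inner_def by (simp add: interval_integral_Ioo set_lebesgue_integral_def)

lemma L2_interval_integrable:
  "L2 h \<Longrightarrow> interval_lebesgue_integrable lborel (ereal a) (ereal b) h"
  using L2_integrable_mult[OF L2_indicator_Ioo]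
  by (auto simp: interval_lebesgue_integrable_def set_integrable_def)

lemma interval_integral_Cauchy_Schwarz:
  assumes "L2 h" shows "\<bar>LBINT t=a..b. h t\<bar> \<le> sqrt (\<bar>b - a\<bar> * L2_inner h h)"
proof -
  have *: "\<bar>LBINT t=a..b. h t\<bar> \<le> sqrt ((b - a) * L2_inner h h)" if ab: "a \<le> b" for a b
  proof -
    have "L2_inner (indicator {a<..<b}) (indicator {a<..<b}) = (\<integral>x. indicator {a<..<b} x \<partial>lborel)"
      unfolding L2_inner_def by (rule Bochner_Integration.integral_cong) (auto simp: indicator_def)
    also have "\<dots> = b - a" using ab by simp
    finally show ?thesis
      using interval_integral_eq_L2_inner[OF ab, of h] L2_Cauchy_Schwarz[OF L2_indicator_Ioo[of a b] assms]
      by simp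
  qed
  show ?thesis
  proof (cases "a \<le> b")
    case True
    then show ?thesis using *[OF True] by simp
  next
    case False
    then show ?thesis
      using *[of b a] interval_integral_endpoints_reverse[of a b h] by simp
  qed
qed

lemma H1_diff_eq_interval_integral:
  assumes "H1 u u'" shows "u x - u y = (LBINT t=y..x. u' t)"
proof -
  have u: "\<And>x. u x = u 0 + (LBINT t=0..x. u' t)" using assms unfolding H1_def by blast
  have "(LBINT t=ereal y..ereal 0. u' t) + (LBINT t=ereal 0..ereal x. u' t) = (LBINT t=ereal y..ereal x. u' t)"
    by (rule interval_integral_sum)
      (simp add: min_def max_def L2_interval_integrable[OF H1_L2(2)[OF assms]])
  moreover have "(LBINT t=ereal y..ereal 0. u' t) = - (LBINT t=ereal 0..ereal y. u' t)"
    by (rule interval_integral_endpoints_reverse)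
  ultimately show ?thesis using u[of x] u[of y] unfolding zero_ereal_def by linarith
qed

lemma H1_Hoelder:
  assumes "H1 u u'" shows "\<bar>u x - u y\<bar> \<le> sqrt (\<bar>x - y\<bar> * L2_inner u' u')"
  using interval_integral_Cauchy_Schwarz[OF H1_L2(2)[OF assms], of y x]
    H1_diff_eq_interval_integral[OF assms, of x y] by simp

lemma H1_lincomb:
  assumes "H1 u u'" "H1 v v'"
  shows "H1 (\<lambda>x. a * u x + b * v x) (\<lambda>x. a * u' x + b * v' x)"
proof (rule H1I)
  show "L2 (\<lambda>x. a * u x + b * v x)" "L2 (\<lambda>x. a * u' x + b * v' x)"
    using assms by (auto intro!: L2_lincomb dest: H1_L2)
  fix x :: real
  have "interval_lebesgue_integrable lborel 0 x u'" "interval_lebesgue_integrable lborel 0 x v'"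
    using L2_interval_integrable[OF H1_L2(2)[OF assms(1)], of 0 x]
      L2_interval_integrable[OF H1_L2(2)[OF assms(2)], of 0 x] by (auto simp: zero_ereal_def)
  then have "(LBINT t=0..x. a * u' t + b * v' t) = a * (LBINT t=0..x. u' t) + b * (LBINT t=0..x. v' t)"
    by (subst interval_lebesgue_integral_add(2)) auto
  moreover have "u x = u 0 + (LBINT t=0..x. u' t)" "v x = v 0 + (LBINT t=0..x. v' t)"
    using assms unfolding H1_def by blast+
  ultimately show "a * u x + b * v x = (a * u 0 + b * v 0) + (LBINT t=0..x. a * u' t + b * v' t)"
    by (simp add: algebra_simps)
qed

lemma H1_add: "H1 u u' \<Longrightarrow> H1 v v' \<Longrightarrow> H1 (\<lambda>x. u x + v x) (\<lambda>x. u' x + v' x)"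
  using H1_lincomb[of u u' v v' 1 1] by simp

lemma H1_diff: "H1 u u' \<Longrightarrow> H1 v v' \<Longrightarrow> H1 (\<lambda>x. u x - v x) (\<lambda>x. u' x - v' x)"
  using H1_lincomb[of u u' v v' 1 "-1"] by simp

lemma H1_scale: "H1 u u' \<Longrightarrow> H1 (\<lambda>x. c * u x) (\<lambda>x. c * u' x)"
  using H1_lincomb[of u u' u u' c 0] by simp

text \<open>Average the Hoelder bound \<open>\<bar>u x\<bar> \<le> \<bar>u y\<bar> + \<parallel>u'\<parallel>\<close> over \<open>y \<in> (x, x + 1)\<close>,
  using \<open>\<bar>u y\<bar> \<le> (1 + (u y)\<^sup>2) / 2\<close>.\<close>
lemma H1_abs_le:
  assumes "H1 u u'" shows "\<bar>u x\<bar> \<le> (1 + L2_inner u u) / 2 + sqrt (L2_inner u' u')"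
proof -
  define I where "I = (indicator {x<..<x+1} :: real \<Rightarrow> real)"
  define D where "D = sqrt (L2_inner u' u')"
  have Lu: "L2 u" using H1_L2[OF assms] by simp
  have intI: "integrable lborel I" unfolding I_def by (rule integrable_indicator_bounded) auto
  have intI_int: "(\<integral>y. I y \<partial>lborel) = 1" unfolding I_def by simp
  have intu2: "integrable lborel (\<lambda>y. I y * (u y)\<^sup>2)"
    unfolding I_def using integrable_real_mult_indicator[of "{x<..<x+1}" lborel "\<lambda>y. (u y)\<^sup>2"] Lu
    by (simp add: L2_def mult.commute)
  have pointwise: "I y * \<bar>u x\<bar> \<le> I y * ((1 + (u y)\<^sup>2) / 2 + D)" for y
  proof (cases "y \<in> {x<..<x+1}")
    case True
    have "\<bar>u x - u y\<bar> \<le> sqrt (\<bar>x - y\<bar> * L2_inner u' u')" by (rule H1_Hoelder[OF assms])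
    also have "\<dots> \<le> D"
      unfolding D_def using True L2_inner_self_nonneg[of u']
      by (intro real_sqrt_le_mono mult_left_le_one_le) auto
    finally have "\<bar>u x - u y\<bar> \<le> D" .
    moreover have "\<bar>u y\<bar> \<le> (1 + (u y)\<^sup>2) / 2"
      using sum_squares_bound[of 1 "\<bar>u y\<bar>"] by simp
    moreover have "\<bar>u x\<bar> \<le> \<bar>u y\<bar> + \<bar>u x - u y\<bar>" by linarith
    ultimately have "\<bar>u x\<bar> \<le> (1 + (u y)\<^sup>2) / 2 + D" by linarith
    then show ?thesis using True by (simp add: I_def)
  qed (simp add: I_def)
  have "\<bar>u x\<bar> = (\<integral>y. I y * \<bar>u x\<bar> \<partial>lborel)" using intI_int by simp
  also have "\<dots> \<le> (\<integral>y. I y * (1/2 + D) + (I y * (u y)\<^sup>2) / 2 \<partial>lborel)"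
    using pointwise intI intu2 by (intro integral_mono) (auto simp: algebra_simps add_divide_distrib)
  also have "\<dots> = (1/2 + D) + (\<integral>y. I y * (u y)\<^sup>2 \<partial>lborel) / 2"
    using intI intu2 intI_int by simp
  also have "(\<integral>y. I y * (u y)\<^sup>2 \<partial>lborel) \<le> (\<integral>y. (u y)\<^sup>2 \<partial>lborel)"
    using intu2 Lu by (intro integral_mono) (auto simp: L2_def I_def indicator_def)
  finally show ?thesis unfolding D_def L2_inner_self by (simp add: add_divide_distrib)
qed

section \<open>Completeness of \<open>L\<^sup>2\<close>\<close>

lemma integral_sq_diff_le_of_AE_limit:
  fixes f :: "nat \<Rightarrow> real \<Rightarrow> real"
  assumes [measurable]: "\<And>k. f k \<in> borel_measurable lborel"
    and [measurable]: "h \<in> borel_measurable lborel" "g \<in> borel_measurable lborel"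
    and lim: "AE x in lborel. (\<lambda>k. f k x) \<longlonglongrightarrow> g x"
    and bound: "\<And>k. k \<ge> N \<Longrightarrow>
      integrable lborel (\<lambda>x. (h x - f k x)\<^sup>2) \<and> (\<integral>x. (h x - f k x)\<^sup>2 \<partial>lborel) \<le> e"
  shows "integrable lborel (\<lambda>x. (h x - g x)\<^sup>2) \<and> (\<integral>x. (h x - g x)\<^sup>2 \<partial>lborel) \<le> e"
proof -
  have "0 \<le> (\<integral>x. (h x - f N x)\<^sup>2 \<partial>lborel)" by (rule integral_nonneg_AE) simp
  then have e0: "e \<ge> 0" using bound[of N] by linarith
  have "(\<integral>\<^sup>+x. ennreal ((h x - g x)\<^sup>2) \<partial>lborel) = (\<integral>\<^sup>+x. liminf (\<lambda>k. ennreal ((h x - f k x)\<^sup>2)) \<partial>lborel)"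
  proof (rule nn_integral_cong_AE)
    show "AE x in lborel. ennreal ((h x - g x)\<^sup>2) = liminf (\<lambda>k. ennreal ((h x - f k x)\<^sup>2))"
      using lim
    proof eventually_elim
      case (elim x)
      have "(\<lambda>k. ennreal ((h x - f k x)\<^sup>2)) \<longlonglongrightarrow> ennreal ((h x - g x)\<^sup>2)"
        by (intro tendsto_ennrealI tendsto_intros elim)
      from lim_imp_Liminf[OF trivial_limit_sequentially this] show ?case by simp
    qed
  qed
  also have "\<dots> \<le> liminf (\<lambda>k. \<integral>\<^sup>+x. ennreal ((h x - f k x)\<^sup>2) \<partial>lborel)"
    by (rule nn_integral_liminf) measurable
  also have "\<dots> \<le> ennreal e"
  proof (rule Liminf_le)
    show "\<forall>\<^sub>F k in sequentially. (\<integral>\<^sup>+x. ennreal ((h x - f k x)\<^sup>2) \<partial>lborel) \<le> ennreal e"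
      unfolding eventually_sequentially
    proof (intro exI allI impI)
      fix k assume k: "N \<le> k"
      have "(\<integral>\<^sup>+x. ennreal ((h x - f k x)\<^sup>2) \<partial>lborel) = ennreal (\<integral>x. (h x - f k x)\<^sup>2 \<partial>lborel)"
        using bound[OF k] by (intro nn_integral_eq_integral) auto
      then show "(\<integral>\<^sup>+x. ennreal ((h x - f k x)\<^sup>2) \<partial>lborel) \<le> ennreal e"
        using bound[OF k] by (simp add: ennreal_leI)
    qed
  qed simp
  finally have F: "(\<integral>\<^sup>+x. ennreal ((h x - g x)\<^sup>2) \<partial>lborel) \<le> ennreal e" .
  have I: "integrable lborel (\<lambda>x. (h x - g x)\<^sup>2)"
  proof (rule integrableI_nonneg)
    show "(\<integral>\<^sup>+x. ennreal ((h x - g x)\<^sup>2) \<partial>lborel) < \<infinity>"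
      using le_less_trans[OF F ennreal_less_top] by simp
  qed auto
  have "ennreal (\<integral>x. (h x - g x)\<^sup>2 \<partial>lborel) = (\<integral>\<^sup>+x. ennreal ((h x - g x)\<^sup>2) \<partial>lborel)"
    using I by (intro nn_integral_eq_integral[symmetric]) auto
  with F have "ennreal (\<integral>x. (h x - g x)\<^sup>2 \<partial>lborel) \<le> ennreal e" by simp
  with e0 have "(\<integral>x. (h x - g x)\<^sup>2 \<partial>lborel) \<le> e" by (simp add: ennreal_le_iff)
  with I show ?thesis by simp
qed

lemma summable_of_weighted_squares:
  fixes a :: "nat \<Rightarrow> real"
  assumes fin: "(\<Sum>j. ennreal (2^j * (a j)\<^sup>2)) \<noteq> \<infinity>"
  shows "summable a"
proof -
  define S where "S = (\<Sum>j. ennreal (2^j * (a j)\<^sup>2))"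
  define s where "s = enn2real S"
  have "S < top" using fin unfolding S_def by (simp add: less_top[symmetric])
  then have Ss: "S = ennreal s" unfolding s_def by (simp add: ennreal_enn2real)
  have s0: "s \<ge> 0" unfolding s_def by (rule enn2real_nonneg)
  have bound: "\<bar>a j\<bar> \<le> sqrt s * sqrt (1/2) ^ j" for j
  proof -
    have "(\<Sum>i\<in>{j}. ennreal (2^i * (a i)\<^sup>2)) \<le> S"
      unfolding S_def by (rule sum_le_suminf) (auto intro: summableI)
    then have "2^j * (a j)\<^sup>2 \<le> s" using s0 by (simp add: Ss ennreal_le_iff)
    then have "(a j)\<^sup>2 \<le> s * (1/2)^j" by (simp add: field_simps power_divide)
    then have "sqrt ((a j)\<^sup>2) \<le> sqrt (s * (1/2)^j)" by (rule real_sqrt_le_mono)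
    moreover have "sqrt ((a j)\<^sup>2) = \<bar>a j\<bar>" by (rule real_sqrt_abs)
    moreover have "sqrt (s * (1/2)^j) = sqrt s * sqrt (1/2) ^ j"
      by (simp only: real_sqrt_mult real_sqrt_power)
    ultimately show ?thesis by simp
  qed
  have "summable (\<lambda>j. sqrt s * sqrt (1/2) ^ j)"
    by (intro summable_mult summable_geometric) simp
  then show "summable a"
    by (rule summable_comparison_test') (use bound in simp)
qed

text \<open>Riesz--Fischer: pass to a subsequence whose consecutive differences \<open>d\<^sub>j\<close> satisfy
  \<open>\<parallel>d\<^sub>j\<parallel>\<^sup>2 < 8\<^sup>-\<^sup>j\<close>; then \<open>\<Sum>\<^sub>j 2\<^sup>j d\<^sub>j\<^sup>2\<close> is integrable, hence finite a.e., which makes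
  \<open>\<Sum>\<^sub>j d\<^sub>j\<close> converge a.e.\<close>
lemma L2_Cauchy_AE_convergent_subseq:
  fixes f :: "nat \<Rightarrow> real \<Rightarrow> real"
  assumes L: "\<And>k. L2 (f k)" and cau: "L2_Cauchy f"
  shows "\<exists>M. strict_mono M \<and> (AE x in lborel. convergent (\<lambda>j. f (M j) x))"
proof -
  have [measurable]: "\<And>k. f k \<in> borel_measurable lborel" using L by (simp add: L2_def)
  have "\<forall>j. \<exists>N. \<forall>n\<ge>N. \<forall>k\<ge>N. L2_inner (\<lambda>x. f n x - f k x) (\<lambda>x. f n x - f k x) < (1/8)^j"
    using cau unfolding L2_Cauchy_def by (metis zero_less_divide_1_iff zero_less_numeral zero_less_power)
  then obtain N where N: "\<And>j n k. n \<ge> N j \<Longrightarrow> k \<ge> N j \<Longrightarrow>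
      L2_inner (\<lambda>x. f n x - f k x) (\<lambda>x. f n x - f k x) < (1/8)^j"
    by metis
  define M where "M j = (\<Sum>i\<le>j. N i) + j" for j
  have MN: "M j \<ge> N j" for j
    unfolding M_def using member_le_sum[of j "{..j}" N] by simp
  have M: "strict_mono M"
    by (rule strict_monoI_Suc) (simp add: M_def)
  define d where "d j x = f (M (Suc j)) x - f (M j) x" for j x
  have dL2: "L2 (d j)" for j unfolding d_def[abs_def] by (intro L2_diff L)
  have [measurable]: "d j \<in> borel_measurable lborel" for j using dL2 by (simp add: L2_def)
  have d_small: "2^j * L2_inner (d j) (d j) \<le> (1/4)^j" for j
  proof -
    have "L2_inner (d j) (d j) < (1/8)^j"
      unfolding d_def[abs_def] using N[of j "M (Suc j)" "M j"] MN[of j] strict_mono_less_eq[OF M, of j "Suc j"]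
      by simp
    then have "2^j * L2_inner (d j) (d j) \<le> 2^j * (1/8)^j" by simp
    also have "\<dots> = (2 * (1/8))^j" by (rule power_mult_distrib[symmetric])
    finally show ?thesis by simp
  qed
  define S where "S x = (\<Sum>j. ennreal (2^j * (d j x)\<^sup>2))" for x
  have [measurable]: "S \<in> borel_measurable lborel" unfolding S_def by measurable
  have "(\<integral>\<^sup>+x. S x \<partial>lborel) = (\<Sum>j. \<integral>\<^sup>+x. ennreal (2^j * (d j x)\<^sup>2) \<partial>lborel)"
    unfolding S_def by (rule nn_integral_suminf) measurable
  also have "\<dots> = (\<Sum>j. ennreal (2^j * L2_inner (d j) (d j)))"
  proof (rule suminf_cong)
    fix j
    have "integrable lborel (\<lambda>x. 2^j * (d j x)\<^sup>2)" using dL2[of j] by (simp add: L2_def)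
    then show "(\<integral>\<^sup>+x. ennreal (2^j * (d j x)\<^sup>2) \<partial>lborel) = ennreal (2^j * L2_inner (d j) (d j))"
      by (subst nn_integral_eq_integral) (auto simp: L2_inner_self)
  qed
  also have "\<dots> \<le> (\<Sum>j. ennreal ((1/4)^j))"
    by (rule suminf_le) (use d_small in \<open>auto intro: ennreal_leI summableI\<close>)
  also have "\<dots> < \<infinity>"
  proof -
    have "(\<Sum>j. ennreal ((1/4::real)^j)) \<noteq> top"
      by (rule ennreal_suminf_neq_top[OF summable_geometric]) auto
    then show ?thesis by (simp add: less_top[symmetric])
  qed
  finally have "AE x in lborel. S x \<noteq> \<infinity>"
    by (intro nn_integral_PInf_AE) auto
  then have "AE x in lborel. convergent (\<lambda>j. f (M j) x)"
  proof eventually_elim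
    case (elim x)
    have "summable (\<lambda>j. d j x)"
      by (rule summable_of_weighted_squares) (use elim in \<open>simp add: S_def\<close>)
    have telescope: "f (M j) x = f (M 0) x + (\<Sum>i<j. d i x)" for j
      unfolding d_def using sum_lessThan_telescope[of "\<lambda>i. f (M i) x" j] by simp
    have "(\<lambda>j. f (M 0) x + (\<Sum>i<j. d i x)) \<longlonglongrightarrow> f (M 0) x + (\<Sum>i. d i x)"
      by (intro tendsto_add tendsto_const summable_LIMSEQ) fact
    then show ?case unfolding telescope[symmetric] by (rule convergentI)
  qed
  with M show ?thesis by blast
qed

lemma L2_limit_of_Cauchy_AE_subseq:
  fixes f :: "nat \<Rightarrow> real \<Rightarrow> real"
  assumes L: "\<And>k. L2 (f k)" and cau: "L2_Cauchy f" and M: "strict_mono M"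
    and [measurable]: "g \<in> borel_measurable lborel"
    and lim: "AE x in lborel. (\<lambda>j. f (M j) x) \<longlonglongrightarrow> g x"
  shows "L2 g" and "(\<lambda>n. L2_inner (\<lambda>x. f n x - g x) (\<lambda>x. f n x - g x)) \<longlonglongrightarrow> 0"
proof -
  have [measurable]: "\<And>k. f k \<in> borel_measurable lborel" using L by (simp add: L2_def)
  have close: "\<exists>K. \<forall>n\<ge>K. L2 (\<lambda>x. f n x - g x) \<and> L2_inner (\<lambda>x. f n x - g x) (\<lambda>x. f n x - g x) \<le> e"
    if e: "e > 0" for e
  proof -
    obtain K where K: "\<And>n k. n \<ge> K \<Longrightarrow> k \<ge> K \<Longrightarrow>
        L2_inner (\<lambda>x. f n x - f k x) (\<lambda>x. f n x - f k x) < e"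
      using cau e unfolding L2_Cauchy_def by blast
    have "integrable lborel (\<lambda>x. (f n x - g x)\<^sup>2) \<and> (\<integral>x. (f n x - g x)\<^sup>2 \<partial>lborel) \<le> e"
      if n: "n \<ge> K" for n
    proof (rule integral_sq_diff_le_of_AE_limit[where f="\<lambda>j. f (M j)" and N=K])
      fix k assume "K \<le> k"
      then have "M k \<ge> K" using seq_suble[OF M, of k] by simp
      then have "L2_inner (\<lambda>x. f n x - f (M k) x) (\<lambda>x. f n x - f (M k) x) < e"
        using K[OF n] by simp
      moreover have "L2 (\<lambda>x. f n x - f (M k) x)" by (intro L2_diff L)
      ultimately show "integrable lborel (\<lambda>x. (f n x - f (M k) x)\<^sup>2) \<and>
          (\<integral>x. (f n x - f (M k) x)\<^sup>2 \<partial>lborel) \<le> e"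
        by (simp add: L2_def L2_inner_self)
    qed (use lim in auto)
    then show ?thesis by (auto simp: L2_def L2_inner_self)
  qed
  obtain K where "L2 (\<lambda>x. f K x - g x)" using close[of 1] by auto
  from L2_diff[OF L[of K] this] show "L2 g" by simp
  show "(\<lambda>n. L2_inner (\<lambda>x. f n x - g x) (\<lambda>x. f n x - g x)) \<longlonglongrightarrow> 0"
  proof (rule metric_LIMSEQ_I)
    fix r :: real assume r: "r > 0"
    then obtain K where "\<And>n. n \<ge> K \<Longrightarrow> L2_inner (\<lambda>x. f n x - g x) (\<lambda>x. f n x - g x) \<le> r / 2"
      using close[of "r/2"] by auto
    then show "\<exists>K. \<forall>n\<ge>K. dist (L2_inner (\<lambda>x. f n x - g x) (\<lambda>x. f n x - g x)) 0 < r"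
      using r L2_inner_self_nonneg[of "\<lambda>x. f _ x - g x"] by fastforce
  qed
qed

lemma L2_complete:
  fixes f :: "nat \<Rightarrow> real \<Rightarrow> real"
  assumes L: "\<And>k. L2 (f k)" and cau: "L2_Cauchy f"
  shows "\<exists>g. L2 g \<and> (\<lambda>n. L2_inner (\<lambda>x. f n x - g x) (\<lambda>x. f n x - g x)) \<longlonglongrightarrow> 0"
proof -
  have [measurable]: "\<And>k. f k \<in> borel_measurable lborel" using L by (simp add: L2_def)
  obtain M where M: "strict_mono M" and conv: "AE x in lborel. convergent (\<lambda>j. f (M j) x)"
    using L2_Cauchy_AE_convergent_subseq[OF L cau] by blast
  define g where "g x = lim (\<lambda>j. f (M j) x)" for x
  have "g \<in> borel_measurable lborel" unfolding g_def[abs_def] by measurable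
  moreover have "AE x in lborel. (\<lambda>j. f (M j) x) \<longlonglongrightarrow> g x"
    using conv by eventually_elim (simp add: g_def convergent_LIMSEQ_iff)
  ultimately show ?thesis using L2_limit_of_Cauchy_AE_subseq[OF L cau M] by blast
qed

section \<open>The energy norm\<close>

definition energy :: "real \<Rightarrow> (real \<Rightarrow> real) \<Rightarrow> (real \<Rightarrow> real) \<Rightarrow> real" where
  "energy \<beta> u u' = L2_inner u' u' + \<beta> * L2_inner u u"

definition energy_inner ::
    "real \<Rightarrow> (real \<Rightarrow> real) \<Rightarrow> (real \<Rightarrow> real) \<Rightarrow> (real \<Rightarrow> real) \<Rightarrow> (real \<Rightarrow> real) \<Rightarrow> real" where
  "energy_inner \<beta> u u' v v' = L2_inner u' v' + \<beta> * L2_inner u v"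

definition energy_Cauchy :: "real \<Rightarrow> (nat \<Rightarrow> real \<Rightarrow> real) \<Rightarrow> (nat \<Rightarrow> real \<Rightarrow> real) \<Rightarrow> bool" where
  "energy_Cauchy \<beta> v v' \<longleftrightarrow>
     (\<forall>e>0. \<exists>N. \<forall>n\<ge>N. \<forall>k\<ge>N. energy \<beta> (\<lambda>x. v n x - v k x) (\<lambda>x. v' n x - v' k x) < e)"

lemma energy_add_mult:
  assumes "H1 u u'" "H1 v v'"
  shows "energy \<beta> (\<lambda>x. u x + t * v x) (\<lambda>x. u' x + t * v' x)
    = energy \<beta> u u' + 2 * t * energy_inner \<beta> u u' v v' + t\<^sup>2 * energy \<beta> v v'"
  unfolding energy_def energy_inner_def
  using L2_inner_self_add_mult[OF H1_L2(1)[OF assms(1)] H1_L2(1)[OF assms(2)], of t]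
    L2_inner_self_add_mult[OF H1_L2(2)[OF assms(1)] H1_L2(2)[OF assms(2)], of t]
  by (simp add: algebra_simps)

lemma energy_parallelogram:
  assumes "H1 f f'" "H1 g g'"
  shows "energy \<beta> (\<lambda>x. f x + g x) (\<lambda>x. f' x + g' x) + energy \<beta> (\<lambda>x. f x - g x) (\<lambda>x. f' x - g' x)
    = 2 * energy \<beta> f f' + 2 * energy \<beta> g g'"
  using energy_add_mult[OF assms, of \<beta> 1] energy_add_mult[OF assms, of \<beta> "-1"] by simp

lemma energy_scale: "energy \<beta> (\<lambda>x. c * u x) (\<lambda>x. c * u' x) = c\<^sup>2 * energy \<beta> u u'"
  unfolding energy_def L2_inner_self_scale by (simp add: algebra_simps)

lemma energy_nonneg: "\<beta> \<ge> 0 \<Longrightarrow> energy \<beta> u u' \<ge> 0"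
  unfolding energy_def using L2_inner_self_nonneg[of u] L2_inner_self_nonneg[of u'] by simp

lemma L2_inner_le_energy: "\<beta> > 0 \<Longrightarrow> L2_inner u u \<le> energy \<beta> u u' / \<beta>"
  unfolding energy_def using L2_inner_self_nonneg[of u'] by (simp add: field_simps)

lemma deriv_L2_inner_le_energy: "\<beta> \<ge> 0 \<Longrightarrow> L2_inner u' u' \<le> energy \<beta> u u'"
  unfolding energy_def using L2_inner_self_nonneg[of u] by simp

text \<open>Uniform boundedness and uniform \<open>1/2\<close>-Hoelder continuity: a diagonal subsequence converges
  on the rationals, hence everywhere.\<close>
lemma H1_pointwise_convergent_subseq:
  fixes U U' :: "nat \<Rightarrow> real \<Rightarrow> real"
  assumes U: "\<And>n. H1 (U n) (U' n)"
    and A: "\<And>n. L2_inner (U n) (U n) \<le> A" and B: "\<And>n. L2_inner (U' n) (U' n) \<le> B"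
  shows "\<exists>k u. strict_mono k \<and> (\<forall>x. (\<lambda>n. U (k n) x) \<longlonglongrightarrow> u x)"
proof -
  have bounded: "\<bar>U n x\<bar> \<le> (1 + A) / 2 + sqrt B" for n x
  proof -
    have "\<bar>U n x\<bar> \<le> (1 + L2_inner (U n) (U n)) / 2 + sqrt (L2_inner (U' n) (U' n))"
      by (rule H1_abs_le[OF U])
    also have "\<dots> \<le> (1 + A) / 2 + sqrt B"
      using A[of n] B[of n] by (intro add_mono divide_right_mono real_sqrt_le_mono) auto
    finally show ?thesis .
  qed
  have B0: "B \<ge> 0" using B[of 0] L2_inner_self_nonneg[of "U' 0"] by linarith
  have hoelder: "\<bar>U n x - U n y\<bar> \<le> sqrt (\<bar>x - y\<bar> * (B + 1))" for n x y
  proof -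
    have "\<bar>U n x - U n y\<bar> \<le> sqrt (\<bar>x - y\<bar> * L2_inner (U' n) (U' n))" by (rule H1_Hoelder[OF U])
    also have "\<dots> \<le> sqrt (\<bar>x - y\<bar> * (B + 1))"
      using B[of n] by (intro real_sqrt_le_mono mult_left_mono) auto
    finally show ?thesis .
  qed
  obtain k where k: "strict_mono k" and kq: "\<And>q. q \<in> \<rat> \<Longrightarrow> \<exists>l. (\<lambda>n. U (k n) q) \<longlonglongrightarrow> l"
    using function_convergent_subsequence[of "\<rat>" U "(1 + A) / 2 + sqrt B"] countable_rat bounded
    by auto
  have "Cauchy (\<lambda>n. U (k n) x)" for x
  proof (rule metric_CauchyI)
    fix e :: real assume e: "e > 0"
    obtain q where q: "q \<in> \<rat>" "x < q" "q < x + (e/3)\<^sup>2 / (B + 1)"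
      using Rats_dense_in_real[of x "x + (e/3)\<^sup>2 / (B + 1)"] e B0 by auto
    have "\<bar>x - q\<bar> * (B + 1) < (e/3)\<^sup>2" using q B0 by (simp add: field_simps)
    then have "sqrt (\<bar>x - q\<bar> * (B + 1)) < sqrt ((e/3)\<^sup>2)" by (rule real_sqrt_less_mono)
    then have "sqrt (\<bar>x - q\<bar> * (B + 1)) < e / 3" using e by simp
    then have near: "\<bar>U (k n) x - U (k n) q\<bar> < e / 3" for n
      using hoelder[of "k n" x q] by linarith
    obtain l where "(\<lambda>n. U (k n) q) \<longlonglongrightarrow> l" using kq[OF q(1)] by blast
    then have "Cauchy (\<lambda>n. U (k n) q)" by (rule LIMSEQ_imp_Cauchy)
    then obtain N where N: "\<And>m n. m \<ge> N \<Longrightarrow> n \<ge> N \<Longrightarrow> \<bar>U (k m) q - U (k n) q\<bar> < e / 3"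
      using e unfolding Cauchy_def dist_real_def by (meson divide_pos_pos zero_less_numeral)
    have "\<bar>U (k m) x - U (k n) x\<bar> < e" if "m \<ge> N" "n \<ge> N" for m n
      using near[of m] near[of n] N[OF that] by linarith
    then show "\<exists>N. \<forall>m\<ge>N. \<forall>n\<ge>N. dist (U (k m) x) (U (k n) x) < e"
      by (auto simp: dist_real_def)
  qed
  then have "(\<lambda>n. U (k n) x) \<longlonglongrightarrow> lim (\<lambda>n. U (k n) x)" for x
    by (simp add: Cauchy_convergent_iff convergent_LIMSEQ_iff)
  with k show ?thesis by (intro exI[of _ k] exI[of _ "\<lambda>x. lim (\<lambda>n. U (k n) x)"]) simp
qed

lemma H1_limit:
  assumes vH: "\<And>n. H1 (v n) (v' n)" and lim: "\<And>x. (\<lambda>n. v n x) \<longlonglongrightarrow> u x"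
    and "L2 u" "L2 g" and lim': "(\<lambda>n. L2_inner (\<lambda>x. v' n x - g x) (\<lambda>x. v' n x - g x)) \<longlonglongrightarrow> 0"
  shows "H1 u g"
proof (rule H1I)
  fix x :: real
  have "(\<lambda>n. LBINT t=0..x. v' n t - g t) \<longlonglongrightarrow> 0"
  proof (rule Lim_null_comparison)
    have "L2 (\<lambda>t. v' n t - g t)" for n by (intro L2_diff \<open>L2 g\<close> H1_L2(2)[OF vH])
    then show "\<forall>\<^sub>F n in sequentially. norm (LBINT t=0..x. v' n t - g t)
        \<le> sqrt (\<bar>x\<bar> * L2_inner (\<lambda>t. v' n t - g t) (\<lambda>t. v' n t - g t))"
      using interval_integral_Cauchy_Schwarz[of _ 0 x] by (auto simp: zero_ereal_def)
    show "(\<lambda>n. sqrt (\<bar>x\<bar> * L2_inner (\<lambda>t. v' n t - g t) (\<lambda>t. v' n t - g t))) \<longlonglongrightarrow> 0"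
      using tendsto_real_sqrt[OF tendsto_mult_left[OF lim', of "\<bar>x\<bar>"]] by simp
  qed
  moreover have "(LBINT t=0..x. v' n t - g t) = (LBINT t=0..x. v' n t) - (LBINT t=0..x. g t)" for n
    using L2_interval_integrable[OF H1_L2(2)[OF vH[of n]], of 0 x] L2_interval_integrable[OF \<open>L2 g\<close>, of 0 x]
    by (intro interval_lebesgue_integral_diff(2)) (auto simp: zero_ereal_def)
  ultimately have "(\<lambda>n. LBINT t=0..x. v' n t) \<longlonglongrightarrow> (LBINT t=0..x. g t)"
    by (simp add: LIM_zero_iff)
  then have "(\<lambda>n. v n 0 + (LBINT t=0..x. v' n t)) \<longlonglongrightarrow> u 0 + (LBINT t=0..x. g t)"
    by (intro tendsto_add lim)
  moreover have "v n x = v n 0 + (LBINT t=0..x. v' n t)" for n using vH[of n] unfolding H1_def by blast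
  ultimately have "(\<lambda>n. v n x) \<longlonglongrightarrow> u 0 + (LBINT t=0..x. g t)" by simp
  then show "u x = u 0 + (LBINT t=0..x. g t)" using lim[of x] LIMSEQ_unique by blast
qed fact+

lemma L2_Cauchy_of_energy_Cauchy:
  assumes \<beta>: "\<beta> > 0" and cau: "energy_Cauchy \<beta> v v'"
  shows "L2_Cauchy v" and "L2_Cauchy v'"
proof -
  have *: "\<exists>N. \<forall>n\<ge>N. \<forall>k\<ge>N. energy \<beta> (\<lambda>x. v n x - v k x) (\<lambda>x. v' n x - v' k x) < e" if "e > 0" for e
    using cau that unfolding energy_Cauchy_def by blast
  show "L2_Cauchy v"
    unfolding L2_Cauchy_def
  proof (intro allI impI)
    fix e :: real assume "e > 0"
    with * \<beta> obtain N where N: "\<And>n k. n \<ge> N \<Longrightarrow> k \<ge> N \<Longrightarrow>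
        energy \<beta> (\<lambda>x. v n x - v k x) (\<lambda>x. v' n x - v' k x) < e * \<beta>"
      by (meson mult_pos_pos)
    have "L2_inner (\<lambda>x. v n x - v k x) (\<lambda>x. v n x - v k x) < e" if "n \<ge> N" "k \<ge> N" for n k
    proof -
      have "energy \<beta> (\<lambda>x. v n x - v k x) (\<lambda>x. v' n x - v' k x) / \<beta> < e"
        using N[OF that] \<beta> by (simp add: pos_divide_less_eq)
      then show ?thesis
        using L2_inner_le_energy[OF \<beta>, of "\<lambda>x. v n x - v k x" "\<lambda>x. v' n x - v' k x"] by linarith
    qed
    then show "\<exists>N. \<forall>n\<ge>N. \<forall>k\<ge>N. L2_inner (\<lambda>x. v n x - v k x) (\<lambda>x. v n x - v k x) < e"
      by blast
  qed
  show "L2_Cauchy v'"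
    unfolding L2_Cauchy_def
  proof (intro allI impI)
    fix e :: real assume "e > 0"
    with * obtain N where N: "\<And>n k. n \<ge> N \<Longrightarrow> k \<ge> N \<Longrightarrow>
        energy \<beta> (\<lambda>x. v n x - v k x) (\<lambda>x. v' n x - v' k x) < e"
      by blast
    have "L2_inner (\<lambda>x. v' n x - v' k x) (\<lambda>x. v' n x - v' k x) < e" if "n \<ge> N" "k \<ge> N" for n k
      using N[OF that] deriv_L2_inner_le_energy[of \<beta> "\<lambda>x. v' n x - v' k x" "\<lambda>x. v n x - v k x"] \<beta>
      by linarith
    then show "\<exists>N. \<forall>n\<ge>N. \<forall>k\<ge>N. L2_inner (\<lambda>x. v' n x - v' k x) (\<lambda>x. v' n x - v' k x) < e"
      by blast
  qed
qed

lemma H1_limit_of_energy_Cauchy: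
  assumes \<beta>: "\<beta> > 0" and vH: "\<And>n. H1 (v n) (v' n)" and cau: "energy_Cauchy \<beta> v v'"
    and lim: "\<And>x. (\<lambda>n. v n x) \<longlonglongrightarrow> u x"
  shows "\<exists>g. H1 u g \<and> (\<lambda>n. energy \<beta> (\<lambda>x. v n x - u x) (\<lambda>x. v' n x - g x)) \<longlonglongrightarrow> 0"
proof -
  obtain g where "L2 g" and lim': "(\<lambda>n. L2_inner (\<lambda>x. v' n x - g x) (\<lambda>x. v' n x - g x)) \<longlonglongrightarrow> 0"
    using L2_complete[of v', OF H1_L2(2)[OF vH] L2_Cauchy_of_energy_Cauchy(2)[OF \<beta> cau]] by blast
  have "u \<in> borel_measurable lborel"
    by (rule borel_measurable_LIMSEQ_real[OF lim]) (use H1_L2(1)[OF vH] in \<open>simp add: L2_def\<close>)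
  moreover have "AE x in lborel. (\<lambda>j. v (id j) x) \<longlonglongrightarrow> u x" using lim by simp
  ultimately have "L2 u" and lim2: "(\<lambda>n. L2_inner (\<lambda>x. v n x - u x) (\<lambda>x. v n x - u x)) \<longlonglongrightarrow> 0"
    using L2_limit_of_Cauchy_AE_subseq[of v, OF H1_L2(1)[OF vH] L2_Cauchy_of_energy_Cauchy(1)[OF \<beta> cau]
        strict_mono_id] by blast+
  have "H1 u g" by (rule H1_limit[OF vH lim \<open>L2 u\<close> \<open>L2 g\<close> lim'])
  moreover have "(\<lambda>n. energy \<beta> (\<lambda>x. v n x - u x) (\<lambda>x. v' n x - g x)) \<longlonglongrightarrow> 0"
    using tendsto_add[OF lim' tendsto_mult_left[OF lim2, of \<beta>]] by (simp add: energy_def)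
  ultimately show ?thesis by blast
qed

section \<open>The quadratic form of a bounded potential\<close>

locale bounded_potential =
  fixes V :: "real \<Rightarrow> real" and C :: real
  assumes V_borel[measurable]: "V \<in> borel_measurable lborel"
    and C_nonneg: "C \<ge> 0"
    and V_bounded: "AE x in lborel. \<bar>V x\<bar> \<le> C"
begin

definition V_form :: "(real \<Rightarrow> real) \<Rightarrow> (real \<Rightarrow> real) \<Rightarrow> real" where
  "V_form f g = (\<integral>x. V x * f x * g x \<partial>lborel)"

text \<open>\<open>excess \<beta> m \<ge> 0\<close> on \<open>H\<^sup>1\<close> says that \<open>m\<close> is a lower bound of the Rayleigh quotient.\<close>
definition excess :: "real \<Rightarrow> real \<Rightarrow> (real \<Rightarrow> real) \<Rightarrow> (real \<Rightarrow> real) \<Rightarrow> real" where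
  "excess \<beta> m u u' = V_form u u - m * energy \<beta> u u'"

lemma integrable_V_form:
  assumes "L2 f" "L2 g" shows "integrable lborel (\<lambda>x. V x * f x * g x)"
proof (rule Bochner_Integration.integrable_bound)
  show "integrable lborel (\<lambda>x. C * (f x * g x))" using L2_integrable_mult[OF assms] by simp
  show "(\<lambda>x. V x * f x * g x) \<in> borel_measurable lborel"
    using assms by (auto simp: L2_def)
  show "AE x in lborel. norm (V x * f x * g x) \<le> norm (C * (f x * g x))"
    using V_bounded
  proof eventually_elim
    case (elim x)
    then have "\<bar>V x\<bar> * \<bar>f x * g x\<bar> \<le> C * \<bar>f x * g x\<bar>" by (intro mult_right_mono) auto
    then show ?case using C_nonneg by (simp add: abs_mult mult.assoc)
  qed
qed

lemma V_form_lincomb_left: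
  assumes "L2 f" "L2 g" "L2 h"
  shows "V_form (\<lambda>x. a * f x + b * g x) h = a * V_form f h + b * V_form g h"
proof -
  have "V_form (\<lambda>x. a * f x + b * g x) h = (\<integral>x. a * (V x * f x * h x) + b * (V x * g x * h x) \<partial>lborel)"
    unfolding V_form_def by (rule Bochner_Integration.integral_cong) (auto simp: algebra_simps)
  also have "\<dots> = a * V_form f h + b * V_form g h"
    using integrable_V_form[OF assms(1,3)] integrable_V_form[OF assms(2,3)] by (simp add: V_form_def)
  finally show ?thesis .
qed

lemma V_form_commute: "V_form f g = V_form g f"
  unfolding V_form_def by (simp add: algebra_simps)

lemma V_form_self_add_mult:
  assumes "L2 f" "L2 g"
  shows "V_form (\<lambda>x. f x + t * g x) (\<lambda>x. f x + t * g x) = V_form f f + 2 * t * V_form f g + t\<^sup>2 * V_form g g"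
proof -
  have L: "L2 (\<lambda>x. f x + t * g x)" using L2_lincomb[OF assms, of 1 t] by simp
  have "V_form (\<lambda>x. 1 * f x + t * g x) (\<lambda>x. f x + t * g x)
      = V_form (\<lambda>x. f x + t * g x) f + t * V_form (\<lambda>x. f x + t * g x) g"
    using V_form_lincomb_left[OF assms L, of 1 t] by (simp add: V_form_commute)
  also have "\<dots> = V_form f f + 2 * t * V_form f g + t\<^sup>2 * V_form g g"
    using V_form_lincomb_left[OF assms assms(1), of 1 t] V_form_lincomb_left[OF assms assms(2), of 1 t]
      V_form_commute[of f g] by (simp add: power2_eq_square algebra_simps)
  finally show ?thesis by simp
qed

lemma V_form_self_scale: "V_form (\<lambda>x. c * f x) (\<lambda>x. c * f x) = c\<^sup>2 * V_form f f"
proof -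
  have "V_form (\<lambda>x. c * f x) (\<lambda>x. c * f x) = (\<integral>x. c\<^sup>2 * (V x * f x * f x) \<partial>lborel)"
    unfolding V_form_def by (rule Bochner_Integration.integral_cong) (auto simp: power2_eq_square)
  then show ?thesis by (simp add: V_form_def)
qed

lemma abs_V_form_self_le:
  assumes f: "L2 f" shows "\<bar>V_form f f\<bar> \<le> C * L2_inner f f"
proof -
  have "\<bar>V_form f f\<bar> \<le> (\<integral>x. \<bar>V x * f x * f x\<bar> \<partial>lborel)"
    unfolding V_form_def by (rule integral_abs_bound)
  also have "\<dots> \<le> (\<integral>x. C * (f x * f x) \<partial>lborel)"
  proof (rule integral_mono_AE)
    show "integrable lborel (\<lambda>x. \<bar>V x * f x * f x\<bar>)" using integrable_V_form[OF f f] by simp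
    show "integrable lborel (\<lambda>x. C * (f x * f x))" using L2_integrable_mult[OF f f] by simp
    show "AE x in lborel. \<bar>V x * f x * f x\<bar> \<le> C * (f x * f x)"
      using V_bounded
    proof eventually_elim
      case (elim x)
      have "\<bar>V x\<bar> * (f x * f x) \<le> C * (f x * f x)" using elim by (intro mult_right_mono) auto
      then show ?case by (simp add: abs_mult mult.assoc)
    qed
  qed
  also have "\<dots> = C * L2_inner f f" by (simp add: L2_inner_def)
  finally show ?thesis .
qed

lemma V_form_self_ge_energy:
  assumes \<beta>: "\<beta> > 0" and u: "H1 u u'" shows "V_form u u \<ge> -(C / \<beta>) * energy \<beta> u u'"
proof -
  have "- C * L2_inner u u \<le> V_form u u" using abs_V_form_self_le[OF H1_L2(1)[OF u]] by linarith
  moreover have "C * L2_inner u u \<le> C * (energy \<beta> u u' / \<beta>)"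
    using L2_inner_le_energy[OF \<beta>] C_nonneg by (intro mult_left_mono) auto
  ultimately show ?thesis by (simp add: field_simps)
qed

lemma V_form_self_le_energy:
  assumes \<beta>: "\<beta> > 0" and u: "H1 u u'" shows "V_form u u \<le> (C / \<beta>) * energy \<beta> u u'"
proof -
  have "V_form u u \<le> C * L2_inner u u" using abs_V_form_self_le[OF H1_L2(1)[OF u]] by linarith
  also have "C * L2_inner u u \<le> C * (energy \<beta> u u' / \<beta>)"
    using L2_inner_le_energy[OF \<beta>] C_nonneg by (intro mult_left_mono) auto
  finally show ?thesis by simp
qed

lemma energy_pos_if_V_form_neg:
  assumes \<beta>: "\<beta> > 0" and u: "H1 u u'" and neg: "V_form u u < 0" shows "energy \<beta> u u' > 0"
proof (rule ccontr)
  assume "\<not> energy \<beta> u u' > 0"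
  then have "energy \<beta> u u' = 0" using energy_nonneg[of \<beta> u u'] \<beta> by simp
  then show False using V_form_self_ge_energy[OF \<beta> u] neg by simp
qed

lemma V_form_self_ge_outside:
  assumes f: "L2 f" and e: "e \<ge> 0" and r: "AE x in lborel. \<bar>x\<bar> > r \<longrightarrow> \<bar>V x\<bar> < e"
  shows "V_form f f \<ge> - C * (\<integral>x. indicator {-r..r} x * (f x)\<^sup>2 \<partial>lborel) - e * L2_inner f f"
proof -
  have i1: "integrable lborel (\<lambda>x. indicator {-r..r} x * (f x)\<^sup>2)"
    using integrable_real_mult_indicator[of "{-r..r}" lborel "\<lambda>x. (f x)\<^sup>2"] f
    by (simp add: L2_def mult.commute)
  have "- C * (\<integral>x. indicator {-r..r} x * (f x)\<^sup>2 \<partial>lborel) - e * L2_inner f f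
      = (\<integral>x. - C * (indicator {-r..r} x * (f x)\<^sup>2) - e * (f x)\<^sup>2 \<partial>lborel)"
    using i1 f by (simp add: L2_def L2_inner_self)
  also have "\<dots> \<le> V_form f f" unfolding V_form_def
  proof (rule integral_mono_AE)
    show "integrable lborel (\<lambda>x. - C * (indicator {-r..r} x * (f x)\<^sup>2) - e * (f x)\<^sup>2)"
      using i1 f by (simp add: L2_def)
    show "integrable lborel (\<lambda>x. V x * f x * f x)" using integrable_V_form[OF f f] .
    show "AE x in lborel. - C * (indicator {-r..r} x * (f x)\<^sup>2) - e * (f x)\<^sup>2 \<le> V x * f x * f x"
      using V_bounded r
    proof eventually_elim
      case (elim x)
      show ?case
      proof (cases "\<bar>x\<bar> > r")
        case True
        then have "- e * (f x)\<^sup>2 \<le> V x * (f x)\<^sup>2" using elim by (intro mult_right_mono) auto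
        moreover have "0 \<le> C * (indicator {-r..r} x * (f x)\<^sup>2)" using C_nonneg by simp
        ultimately show ?thesis by (simp add: power2_eq_square mult.assoc)
      next
        case False
        then have "indicator {-r..r} x = (1::real)" by (auto simp: indicator_def abs_le_iff)
        moreover have "- C * (f x)\<^sup>2 \<le> V x * (f x)\<^sup>2" using elim by (intro mult_right_mono) auto
        moreover have "0 \<le> e * (f x)\<^sup>2" using e by simp
        ultimately show ?thesis by (simp add: power2_eq_square mult.assoc)
      qed
    qed
  qed
  finally show ?thesis .
qed

lemma excess_parallelogram:
  assumes "H1 f f'" "H1 g g'"
  shows "excess \<beta> m (\<lambda>x. f x + g x) (\<lambda>x. f' x + g' x) + excess \<beta> m (\<lambda>x. f x - g x) (\<lambda>x. f' x - g' x)
    = 2 * excess \<beta> m f f' + 2 * excess \<beta> m g g'"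
proof -
  have "V_form (\<lambda>x. f x + g x) (\<lambda>x. f x + g x) + V_form (\<lambda>x. f x - g x) (\<lambda>x. f x - g x)
      = 2 * V_form f f + 2 * V_form g g"
    using V_form_self_add_mult[OF H1_L2(1)[OF assms(1)] H1_L2(1)[OF assms(2)], of 1]
      V_form_self_add_mult[OF H1_L2(1)[OF assms(1)] H1_L2(1)[OF assms(2)], of "-1"] by simp
  moreover have "m * energy \<beta> (\<lambda>x. f x + g x) (\<lambda>x. f' x + g' x) + m * energy \<beta> (\<lambda>x. f x - g x) (\<lambda>x. f' x - g' x)
      = 2 * (m * energy \<beta> f f') + 2 * (m * energy \<beta> g g')"
    using arg_cong[OF energy_parallelogram[OF assms, of \<beta>], of "(*) m"] by (simp add: algebra_simps)
  ultimately show ?thesis unfolding excess_def right_diff_distrib by linarith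
qed

lemma excess_add_mult:
  assumes "H1 u u'" "H1 p p'"
  shows "excess \<beta> m (\<lambda>x. u x + t * p x) (\<lambda>x. u' x + t * p' x)
    = excess \<beta> m u u' + 2 * t * (V_form u p - m * energy_inner \<beta> u u' p p') + t\<^sup>2 * excess \<beta> m p p'"
  unfolding excess_def
  using V_form_self_add_mult[OF H1_L2(1)[OF assms(1)] H1_L2(1)[OF assms(2)], of t]
    energy_add_mult[OF assms, of \<beta> t]
  by (simp add: algebra_simps)

section \<open>Minimisers of the Rayleigh quotient are eigenfunctions\<close>

definition rayleigh_quotients :: "real \<Rightarrow> real set" where
  "rayleigh_quotients \<beta> = {V_form u u / energy \<beta> u u' | u u'. H1 u u' \<and> energy \<beta> u u' > 0}"

lemma bdd_below_rayleigh_quotients: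
  assumes \<beta>: "\<beta> > 0" shows "bdd_below (rayleigh_quotients \<beta>)"
proof (rule bdd_belowI)
  fix r assume "r \<in> rayleigh_quotients \<beta>"
  then obtain u u' where u: "H1 u u'" "energy \<beta> u u' > 0" "r = V_form u u / energy \<beta> u u'"
    unfolding rayleigh_quotients_def by blast
  then show "- (C / \<beta>) \<le> r"
    using V_form_self_ge_energy[OF \<beta> u(1)] by (simp add: pos_le_divide_eq)
qed

lemma excess_Inf_rayleigh_quotients_nonneg:
  assumes \<beta>: "\<beta> > 0" and u: "H1 u u'"
  shows "excess \<beta> (Inf (rayleigh_quotients \<beta>)) u u' \<ge> 0"
proof (cases "energy \<beta> u u' > 0")
  case True
  then have "V_form u u / energy \<beta> u u' \<in> rayleigh_quotients \<beta>"
    unfolding rayleigh_quotients_def using u by blast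
  then have "Inf (rayleigh_quotients \<beta>) \<le> V_form u u / energy \<beta> u u'"
    by (rule cInf_lower[OF _ bdd_below_rayleigh_quotients[OF \<beta>]])
  then show ?thesis using True by (simp add: excess_def pos_le_divide_eq)
next
  case False
  then have E0: "energy \<beta> u u' = 0" using energy_nonneg[of \<beta> u u'] \<beta> by simp
  then have "V_form u u = 0"
    using V_form_self_ge_energy[OF \<beta> u] V_form_self_le_energy[OF \<beta> u] by simp
  then show ?thesis using E0 by (simp add: excess_def)
qed

lemma minimizing_sequence:
  assumes \<beta>: "\<beta> > 0" and w: "H1 w w'" "energy \<beta> w w' > 0"
  shows "\<exists>U U'. \<forall>n. H1 (U n) (U' n) \<and> energy \<beta> (U n) (U' n) = 1 \<and>
    excess \<beta> (Inf (rayleigh_quotients \<beta>)) (U n) (U' n) < 1 / Suc n"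
proof -
  let ?m = "Inf (rayleigh_quotients \<beta>)"
  have ne: "rayleigh_quotients \<beta> \<noteq> {}" unfolding rayleigh_quotients_def using w by blast
  have "\<exists>u u'. H1 u u' \<and> energy \<beta> u u' = 1 \<and> excess \<beta> ?m u u' < 1 / Suc n" for n
  proof -
    obtain r where r: "r \<in> rayleigh_quotients \<beta>" "r < ?m + 1 / Suc n"
      using cInf_lessD[OF ne, of "?m + 1 / Suc n"] by auto
    then obtain u u' where u: "H1 u u'" "energy \<beta> u u' > 0" "r = V_form u u / energy \<beta> u u'"
      unfolding rayleigh_quotients_def by blast
    define c where "c = 1 / sqrt (energy \<beta> u u')"
    have c2: "c\<^sup>2 = 1 / energy \<beta> u u'" unfolding c_def using u(2) by (simp add: power_divide)
    have "H1 (\<lambda>x. c * u x) (\<lambda>x. c * u' x)" by (rule H1_scale[OF u(1)])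
    moreover have "energy \<beta> (\<lambda>x. c * u x) (\<lambda>x. c * u' x) = 1"
      unfolding energy_scale c2 using u(2) by simp
    moreover have "V_form (\<lambda>x. c * u x) (\<lambda>x. c * u x) = r"
      unfolding V_form_self_scale c2 u(3) by simp
    ultimately show ?thesis using r(2) unfolding excess_def
      by (intro exI[of _ "\<lambda>x. c * u x"] exI[of _ "\<lambda>x. c * u' x"]) auto
  qed
  then show ?thesis by metis
qed

lemma Euler_Lagrange:
  assumes u: "H1 u u'" and min: "\<And>f f'. H1 f f' \<Longrightarrow> excess \<beta> m f f' \<ge> 0"
    and zero: "excess \<beta> m u u' = 0" and p: "H1 p p'"
  shows "V_form u p = m * energy_inner \<beta> u u' p p'"
proof -
  have "(V_form u p - m * energy_inner \<beta> u u' p p')\<^sup>2 \<le> 0 * excess \<beta> m p p'"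
  proof (rule nonneg_quadratic_imp_sq_le)
    show "excess \<beta> m p p' \<ge> 0" by (rule min[OF p])
    fix t
    have "H1 (\<lambda>x. u x + t * p x) (\<lambda>x. u' x + t * p' x)"
      using H1_lincomb[OF u p, of 1 t] by simp
    from min[OF this] show "0 \<le> 0 + 2 * t * (V_form u p - m * energy_inner \<beta> u u' p p') + t\<^sup>2 * excess \<beta> m p p'"
      unfolding excess_add_mult[OF u p] zero by simp
  qed
  then show ?thesis by simp
qed

lemma K_eigenvalue_of_minimizer:
  assumes \<beta>: "\<beta> > 0" and u: "H1 u u'" and Epos: "energy \<beta> u u' > 0" and m: "m < 0"
    and min: "\<And>f f'. H1 f f' \<Longrightarrow> excess \<beta> m f f' \<ge> 0" and zero: "excess \<beta> m u u' = 0"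
  shows "K_eigenvalue V \<beta> m"
  unfolding K_eigenvalue_def
proof (intro exI conjI allI impI)
  show "H1 u u'" by (rule u)
  have "V_form u u < 0" using zero Epos m by (simp add: excess_def mult_neg_pos)
  then have "L2_inner u u \<noteq> 0" using abs_V_form_self_le[OF H1_L2(1)[OF u]] by auto
  then show "(\<integral>x. (u x)\<^sup>2 \<partial>lborel) > 0" using L2_inner_self_nonneg[of u] unfolding L2_inner_self by linarith
  fix p p' assume "H1 p p'"
  from Euler_Lagrange[OF u min zero this]
  show "(\<integral>x. V x * u x * p x \<partial>lborel) = m * ((\<integral>x. u' x * p' x \<partial>lborel) + \<beta> * (\<integral>x. u x * p x \<partial>lborel))"
    unfolding V_form_def energy_inner_def L2_inner_def .
qed

lemma K_eigenvalue_ge: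
  assumes \<beta>: "\<beta> > 0" and min: "\<And>f f'. H1 f f' \<Longrightarrow> excess \<beta> m f f' \<ge> 0"
    and "K_eigenvalue V \<beta> \<mu>"
  shows "m \<le> \<mu>"
proof -
  obtain u u' where u: "H1 u u'" and pos: "(\<integral>x. (u x)\<^sup>2 \<partial>lborel) > 0"
    and eq: "\<And>p p'. H1 p p' \<Longrightarrow> (\<integral>x. V x * u x * p x \<partial>lborel)
            = \<mu> * ((\<integral>x. u' x * p' x \<partial>lborel) + \<beta> * (\<integral>x. u x * p x \<partial>lborel))"
    using assms(3) unfolding K_eigenvalue_def by blast
  have "V_form u u = \<mu> * energy \<beta> u u'"
    using eq[OF u] unfolding V_form_def energy_def L2_inner_def .
  moreover have "energy \<beta> u u' > 0"
  proof -
    have "0 < L2_inner u u" using pos by (simp add: L2_inner_self)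
    also have "\<dots> \<le> energy \<beta> u u' / \<beta>" by (rule L2_inner_le_energy[OF \<beta>])
    finally show ?thesis using \<beta> by (simp add: zero_less_divide_iff)
  qed
  ultimately show ?thesis using min[OF u] by (simp add: excess_def)
qed

end

section \<open>Existence of a minimiser\<close>

lemma local_L2_Cauchy_of_bounded_convergent:
  fixes v :: "nat \<Rightarrow> real \<Rightarrow> real"
  assumes [measurable]: "\<And>n. v n \<in> borel_measurable lborel"
    and bound: "\<And>n x. \<bar>v n x\<bar> \<le> M" and lim: "\<And>x. (\<lambda>n. v n x) \<longlonglongrightarrow> u x" and e: "e > 0"
  shows "\<exists>N. \<forall>a\<ge>N. \<forall>c\<ge>N. (\<integral>x. indicator {-r..r} x * (v a x - v c x)\<^sup>2 \<partial>lborel) < e"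
proof -
  define I where "I = (indicator {-r..r} :: real \<Rightarrow> real)"
  have I_int: "integrable lborel I" unfolding I_def by (rule integrable_indicator_bounded) auto
  have I_nonneg: "0 \<le> I x" for x by (simp add: I_def)
  have [measurable]: "u \<in> borel_measurable lborel"
    by (rule borel_measurable_LIMSEQ_real[OF lim]) simp
  have u_bound: "\<bar>u x\<bar> \<le> M" for x
    by (rule LIMSEQ_le_const2[OF tendsto_rabs[OF lim[of x]]]) (use bound in auto)
  have diff_bound: "(f - g)\<^sup>2 \<le> (2 * M)\<^sup>2" if "\<bar>f\<bar> \<le> M" "\<bar>g\<bar> \<le> M" for f g :: real
  proof -
    have "\<bar>f - g\<bar> \<le> 2 * M" using that by linarith
    then have "\<bar>f - g\<bar>\<^sup>2 \<le> (2 * M)\<^sup>2" by (rule power_mono) simp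
    then show ?thesis by simp
  qed
  define s where "s n x = I x * (v n x - u x)\<^sup>2" for n x
  have [measurable]: "s n \<in> borel_measurable lborel" for n unfolding s_def I_def by measurable
  have dominated: "AE x in lborel. norm (s n x) \<le> I x * (2 * M)\<^sup>2" for n
  proof (rule AE_I2)
    fix x
    have "0 \<le> s n x" using I_nonneg by (simp add: s_def)
    then show "norm (s n x) \<le> I x * (2 * M)\<^sup>2"
      using mult_left_mono[OF diff_bound[OF bound u_bound] I_nonneg] by (simp add: s_def)
  qed
  have s_lim: "AE x in lborel. (\<lambda>n. s n x) \<longlonglongrightarrow> 0"
  proof (rule AE_I2)
    fix x
    have "(\<lambda>n. I x * (v n x - u x)\<^sup>2) \<longlonglongrightarrow> I x * (u x - u x)\<^sup>2" by (intro tendsto_intros lim)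
    then show "(\<lambda>n. s n x) \<longlonglongrightarrow> 0" by (simp add: s_def)
  qed
  have I_int': "integrable lborel (\<lambda>x. I x * (2 * M)\<^sup>2)" using I_int by simp
  have s_int: "integrable lborel (s n)" for n
    using integrable_dominated_convergence2[OF _ _ I_int' s_lim dominated] by simp
  have "(\<lambda>n. \<integral>x. s n x \<partial>lborel) \<longlonglongrightarrow> (\<integral>x. 0 \<partial>lborel)"
    using integral_dominated_convergence[OF _ _ I_int' s_lim dominated] by simp
  then obtain N where N: "\<And>n. n \<ge> N \<Longrightarrow> (\<integral>x. s n x \<partial>lborel) < e / 4"
    using order_tendstoD(2)[of _ 0 sequentially "e / 4"] e unfolding eventually_sequentially by auto
  have "(\<integral>x. I x * (v a x - v c x)\<^sup>2 \<partial>lborel) < e" if "a \<ge> N" "c \<ge> N" for a c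
  proof -
    have "(\<integral>x. I x * (v a x - v c x)\<^sup>2 \<partial>lborel) \<le> (\<integral>x. 2 * s a x + 2 * s c x \<partial>lborel)"
    proof (rule integral_mono)
      show "integrable lborel (\<lambda>x. I x * (v a x - v c x)\<^sup>2)"
      proof (rule Bochner_Integration.integrable_bound[OF I_int'])
        show "(\<lambda>x. I x * (v a x - v c x)\<^sup>2) \<in> borel_measurable lborel" unfolding I_def by measurable
        show "AE x in lborel. norm (I x * (v a x - v c x)\<^sup>2) \<le> norm (I x * (2 * M)\<^sup>2)"
          using mult_left_mono[OF diff_bound[OF bound bound] I_nonneg] I_nonneg by (intro AE_I2) simp
      qed
      show "integrable lborel (\<lambda>x. 2 * s a x + 2 * s c x)" using s_int by simp
      fix x
      have "0 \<le> ((v a x - u x) + (v c x - u x))\<^sup>2" by simp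
      then have "(v a x - v c x)\<^sup>2 \<le> 2 * (v a x - u x)\<^sup>2 + 2 * (v c x - u x)\<^sup>2"
        by (simp add: power2_eq_square algebra_simps)
      from mult_left_mono[OF this I_nonneg]
      show "I x * (v a x - v c x)\<^sup>2 \<le> 2 * s a x + 2 * s c x" by (simp add: s_def algebra_simps)
    qed
    also have "\<dots> < e" using N[OF that(1)] N[OF that(2)] s_int by simp
    finally show ?thesis .
  qed
  then show ?thesis unfolding I_def by blast
qed

context bounded_potential
begin

lemma energy_le_excess_local:
  assumes \<beta>: "\<beta> > 0" and m: "m < 0" and f: "H1 f f'"
    and r: "AE x in lborel. \<bar>x\<bar> > r \<longrightarrow> \<bar>V x\<bar> < - m * \<beta> / 2"
  shows "energy \<beta> f f' \<le> (2 / (- m)) * (excess \<beta> m f f' + C * (\<integral>x. indicator {-r..r} x * (f x)\<^sup>2 \<partial>lborel))"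
proof -
  define L where "L = (\<integral>x. indicator {-r..r} x * (f x)\<^sup>2 \<partial>lborel)"
  have e0: "- m * \<beta> / 2 \<ge> 0" using mult_neg_pos[OF m \<beta>] by simp
  have "V_form f f \<ge> - C * L - (- m * \<beta> / 2) * L2_inner f f"
    unfolding L_def by (rule V_form_self_ge_outside[OF H1_L2(1)[OF f] e0 r])
  moreover have "(- m * \<beta> / 2) * L2_inner f f \<le> (- m * \<beta> / 2) * (energy \<beta> f f' / \<beta>)"
    using L2_inner_le_energy[OF \<beta>, of f f'] e0 by (intro mult_left_mono) auto
  ultimately have "(- m / 2) * energy \<beta> f f' \<le> excess \<beta> m f f' + C * L"
    using \<beta> by (simp add: excess_def algebra_simps)
  then show ?thesis using m unfolding L_def by (simp add: field_simps)
qed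

lemma limit_of_minimizing_sequence:
  assumes \<beta>: "\<beta> > 0" and min: "\<And>f f'. H1 f f' \<Longrightarrow> excess \<beta> m f f' \<ge> 0"
    and vH: "\<And>n. H1 (v n) (v' n)" and vE: "\<And>n. energy \<beta> (v n) (v' n) = 1"
    and vQ: "\<And>n. excess \<beta> m (v n) (v' n) < 1 / Suc n"
    and u: "H1 u u'" and lim: "(\<lambda>n. energy \<beta> (\<lambda>x. v n x - u x) (\<lambda>x. v' n x - u' x)) \<longlonglongrightarrow> 0"
  shows "excess \<beta> m u u' = 0" and "energy \<beta> u u' > 0"
proof -
  define w where "w n x = v n x - u x" for n x
  define w' where "w' n x = v' n x - u' x" for n x
  have wH: "H1 (w n) (w' n)" for n unfolding w_def w'_def by (rule H1_diff[OF vH u])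
  have lim: "(\<lambda>n. energy \<beta> (w n) (w' n)) \<longlonglongrightarrow> 0" using lim by (simp add: w_def[abs_def] w'_def[abs_def])
  have "excess \<beta> m u u' \<le> 2 * (1 / Suc n) + 2 * ((C / \<beta> - m) * energy \<beta> (w n) (w' n))" for n
  proof -
    have "excess \<beta> m (w n) (w' n) \<le> (C / \<beta> - m) * energy \<beta> (w n) (w' n)"
      using V_form_self_le_energy[OF \<beta> wH] by (simp add: excess_def algebra_simps)
    moreover have "excess \<beta> m (\<lambda>x. v n x + w n x) (\<lambda>x. v' n x + w' n x) \<ge> 0"
      by (rule min[OF H1_add[OF vH wH]])
    moreover have "(\<lambda>x. v n x - w n x) = u" "(\<lambda>x. v' n x - w' n x) = u'"
      by (auto simp: w_def w'_def)
    with excess_parallelogram[OF vH[of n] wH[of n], of \<beta> m]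
    have "excess \<beta> m (\<lambda>x. v n x + w n x) (\<lambda>x. v' n x + w' n x) + excess \<beta> m u u'
        = 2 * excess \<beta> m (v n) (v' n) + 2 * excess \<beta> m (w n) (w' n)" by simp
    ultimately show ?thesis using vQ[of n] by linarith
  qed
  moreover have "(\<lambda>n. 2 * (1 / Suc n) + 2 * ((C / \<beta> - m) * energy \<beta> (w n) (w' n)))
      \<longlonglongrightarrow> 2 * 0 + 2 * ((C / \<beta> - m) * 0)"
    by (intro tendsto_intros LIMSEQ_Suc[OF lim_inverse_n'] lim)
  ultimately have "excess \<beta> m u u' \<le> 0" by (intro LIMSEQ_le_const) auto
  then show "excess \<beta> m u u' = 0" using min[OF u] by simp
  have "1 / 2 - energy \<beta> (w n) (w' n) \<le> energy \<beta> u u'" for n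
  proof -
    have "(\<lambda>x. u x + w n x) = v n" "(\<lambda>x. u' x + w' n x) = v' n" by (auto simp: w_def w'_def)
    then show ?thesis
      using energy_parallelogram[OF u wH[of n], of \<beta>] vE[of n] \<beta>
        energy_nonneg[of \<beta> "\<lambda>x. u x - w n x" "\<lambda>x. u' x - w' n x"] by simp
  qed
  moreover have "(\<lambda>n. 1 / 2 - energy \<beta> (w n) (w' n)) \<longlonglongrightarrow> 1 / 2"
    using tendsto_diff[OF tendsto_const lim] by simp
  ultimately have "1 / 2 \<le> energy \<beta> u u'" by (intro LIMSEQ_le_const2) auto
  then show "energy \<beta> u u' > 0" by simp
qed

end

locale decaying_potential = bounded_potential +
  assumes V_decay: "\<And>e. e > 0 \<Longrightarrow> \<exists>r. AE x in lborel. \<bar>x\<bar> > r \<longrightarrow> \<bar>V x\<bar> < e"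
begin

text \<open>Since \<open>m < 0\<close> and \<open>V\<close> is small far out, the energy of a difference is controlled by its
  excess, which is small by the parallelogram law, and by its \<open>L\<^sup>2\<close> norm on a fixed bounded
  interval, which is small by dominated convergence.\<close>
lemma minimizing_sequence_energy_Cauchy:
  assumes \<beta>: "\<beta> > 0" and m: "m < 0" and min: "\<And>f f'. H1 f f' \<Longrightarrow> excess \<beta> m f f' \<ge> 0"
    and vH: "\<And>n. H1 (v n) (v' n)" and vE: "\<And>n. energy \<beta> (v n) (v' n) = 1"
    and vQ: "\<And>n. excess \<beta> m (v n) (v' n) < 1 / Suc n"
    and lim: "\<And>x. (\<lambda>n. v n x) \<longlonglongrightarrow> u x"
  shows "energy_Cauchy \<beta> v v'"
  unfolding energy_Cauchy_def
proof (intro allI impI)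
  fix \<epsilon> :: real assume \<epsilon>: "\<epsilon> > 0"
  obtain r where r: "AE x in lborel. \<bar>x\<bar> > r \<longrightarrow> \<bar>V x\<bar> < - m * \<beta> / 2"
    using V_decay[of "- m * \<beta> / 2"] mult_neg_pos[OF m \<beta>] by auto
  define \<delta> where "\<delta> = \<epsilon> * (- m) / (16 * (1 + C))"
  have \<delta>: "\<delta> > 0" unfolding \<delta>_def using \<epsilon> m C_nonneg by (intro divide_pos_pos mult_pos_pos) auto
  have "\<bar>v n x\<bar> \<le> (1 + 1 / \<beta>) / 2 + 1" for n x
  proof -
    have "L2_inner (v n) (v n) \<le> 1 / \<beta>" "L2_inner (v' n) (v' n) \<le> 1"
      using L2_inner_le_energy[OF \<beta>, of "v n" "v' n"] deriv_L2_inner_le_energy[of \<beta> "v' n" "v n"] vE \<beta>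
      by auto
    then show ?thesis
      by (intro order_trans[OF H1_abs_le[OF vH]] add_mono divide_right_mono)
        (auto simp: real_sqrt_le_1_iff)
  qed
  then have "\<exists>N. \<forall>a\<ge>N. \<forall>c\<ge>N. (\<integral>x. indicator {-r..r} x * (v a x - v c x)\<^sup>2 \<partial>lborel) < 4 * \<delta>"
    using H1_L2(1)[OF vH] \<delta> by (intro local_L2_Cauchy_of_bounded_convergent[OF _ _ lim]) (auto simp: L2_def)
  then obtain N1 where N1: "\<And>a c. a \<ge> N1 \<Longrightarrow> c \<ge> N1 \<Longrightarrow>
      (\<integral>x. indicator {-r..r} x * (v a x - v c x)\<^sup>2 \<partial>lborel) < 4 * \<delta>"
    by blast
  obtain N2 where N2: "\<And>n. n \<ge> N2 \<Longrightarrow> 1 / real (Suc n) < \<delta>"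
    using order_tendstoD(2)[OF LIMSEQ_Suc[OF lim_inverse_n'] \<delta>] by (auto simp: eventually_sequentially)
  have "energy \<beta> (\<lambda>x. v a x - v c x) (\<lambda>x. v' a x - v' c x) < \<epsilon>" if "a \<ge> max N1 N2" "c \<ge> max N1 N2" for a c
  proof -
    have "excess \<beta> m (\<lambda>x. v a x + v c x) (\<lambda>x. v' a x + v' c x) \<ge> 0"
      by (rule min[OF H1_add[OF vH vH]])
    then have "excess \<beta> m (\<lambda>x. v a x - v c x) (\<lambda>x. v' a x - v' c x) \<le> 4 * \<delta>"
      using excess_parallelogram[OF vH[of a] vH[of c], of \<beta> m] vQ[of a] vQ[of c] N2[of a] N2[of c] that
      by simp
    moreover have "(\<integral>x. indicator {-r..r} x * (v a x - v c x)\<^sup>2 \<partial>lborel) \<le> 4 * \<delta>"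
      using N1[of a c] that by simp
    ultimately have "excess \<beta> m (\<lambda>x. v a x - v c x) (\<lambda>x. v' a x - v' c x)
        + C * (\<integral>x. indicator {-r..r} x * (v a x - v c x)\<^sup>2 \<partial>lborel) \<le> 4 * \<delta> + C * (4 * \<delta>)"
      using C_nonneg by (intro add_mono mult_left_mono) auto
    then have "energy \<beta> (\<lambda>x. v a x - v c x) (\<lambda>x. v' a x - v' c x) \<le> (2 / (- m)) * (4 * \<delta> + C * (4 * \<delta>))"
      using energy_le_excess_local[OF \<beta> m H1_diff[OF vH[of a] vH[of c]] r] m
      by (meson order_trans mult_left_mono divide_nonneg_pos neg_0_less_iff_less less_imp_le zero_le_numeral)
    also have "4 * \<delta> + C * (4 * \<delta>) = 4 * (1 + C) * \<delta>" by (simp add: algebra_simps)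
    also have "\<dots> = \<epsilon> * (- m) / 4" unfolding \<delta>_def using C_nonneg by (simp add: field_simps)
    also have "(2 / (- m)) * (\<epsilon> * (- m) / 4) = \<epsilon> / 2" using m by (simp add: field_simps)
    finally show ?thesis using \<epsilon> by simp
  qed
  then show "\<exists>N. \<forall>a\<ge>N. \<forall>c\<ge>N. energy \<beta> (\<lambda>x. v a x - v c x) (\<lambda>x. v' a x - v' c x) < \<epsilon>" by blast
qed

lemma minimizer_exists:
  assumes \<beta>: "\<beta> > 0" and w: "H1 w w'" "V_form w w < 0"
  shows "Inf (rayleigh_quotients \<beta>) < 0 \<and>
    (\<exists>u u'. H1 u u' \<and> energy \<beta> u u' > 0 \<and> excess \<beta> (Inf (rayleigh_quotients \<beta>)) u u' = 0)"
proof -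
  define m where "m = Inf (rayleigh_quotients \<beta>)"
  have Ew: "energy \<beta> w w' > 0" by (rule energy_pos_if_V_form_neg[OF \<beta> w])
  then have "V_form w w / energy \<beta> w w' \<in> rayleigh_quotients \<beta>"
    unfolding rayleigh_quotients_def using w by blast
  then have "m \<le> V_form w w / energy \<beta> w w'"
    unfolding m_def by (rule cInf_lower[OF _ bdd_below_rayleigh_quotients[OF \<beta>]])
  also have "\<dots> < 0" using w Ew by (simp add: divide_neg_pos)
  finally have m: "m < 0" .
  have min: "\<And>f f'. H1 f f' \<Longrightarrow> excess \<beta> m f f' \<ge> 0"
    unfolding m_def by (rule excess_Inf_rayleigh_quotients_nonneg[OF \<beta>])
  obtain U U' where U: "\<And>n. H1 (U n) (U' n)" "\<And>n. energy \<beta> (U n) (U' n) = 1"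
      "\<And>n. excess \<beta> m (U n) (U' n) < 1 / Suc n"
    using minimizing_sequence[OF \<beta> w(1) Ew] unfolding m_def by blast
  have "L2_inner (U n) (U n) \<le> 1 / \<beta>" "L2_inner (U' n) (U' n) \<le> 1" for n
    using L2_inner_le_energy[OF \<beta>, of "U n" "U' n"] deriv_L2_inner_le_energy[of \<beta> "U' n" "U n"] U(2) \<beta>
    by auto
  then obtain k u where k: "strict_mono k" and lim: "\<And>x. (\<lambda>n. U (k n) x) \<longlonglongrightarrow> u x"
    using H1_pointwise_convergent_subseq[of U U', OF U(1)] by blast
  define v where "v n = U (k n)" for n
  define v' where "v' n = U' (k n)" for n
  have vH: "H1 (v n) (v' n)" and vE: "energy \<beta> (v n) (v' n) = 1" for n
    unfolding v_def v'_def by (rule U(1), rule U(2))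
  have vQ: "excess \<beta> m (v n) (v' n) < 1 / Suc n" for n
  proof -
    have "1 / real (Suc (k n)) \<le> 1 / real (Suc n)"
      using seq_suble[OF k, of n] by (intro divide_left_mono) auto
    then show ?thesis using U(3)[of "k n"] unfolding v_def v'_def by linarith
  qed
  have vlim: "(\<lambda>n. v n x) \<longlonglongrightarrow> u x" for x unfolding v_def by (rule lim)
  have "energy_Cauchy \<beta> v v'"
    by (rule minimizing_sequence_energy_Cauchy[OF \<beta> m min vH vE vQ vlim])
  then obtain g where "H1 u g" and "(\<lambda>n. energy \<beta> (\<lambda>x. v n x - u x) (\<lambda>x. v' n x - g x)) \<longlonglongrightarrow> 0"
    using H1_limit_of_energy_Cauchy[OF \<beta> vH _ vlim] by blast
  with limit_of_minimizing_sequence[OF \<beta> min vH vE vQ] m show ?thesis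
    unfolding m_def by blast
qed

lemma negative_eigenvalue_and_mu1_le:
  assumes \<beta>: "\<beta> > 0" and w: "H1 w w'" "V_form w w < 0"
  shows "(\<exists>\<mu><0. K_eigenvalue V \<beta> \<mu>) \<and> mu1 V \<beta> \<le> V_form w w / energy \<beta> w w'"
proof -
  define m where "m = Inf (rayleigh_quotients \<beta>)"
  obtain u u' where m: "m < 0" and u: "H1 u u'" "energy \<beta> u u' > 0" "excess \<beta> m u u' = 0"
    using minimizer_exists[OF \<beta> w] unfolding m_def by blast
  have min: "\<And>f f'. H1 f f' \<Longrightarrow> excess \<beta> m f f' \<ge> 0"
    unfolding m_def by (rule excess_Inf_rayleigh_quotients_nonneg[OF \<beta>])
  have ev: "K_eigenvalue V \<beta> m" by (rule K_eigenvalue_of_minimizer[OF \<beta> u(1,2) m min u(3)])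
  have "mu1 V \<beta> = m"
    unfolding mu1_def by (rule cInf_eq_minimum) (use m ev K_eigenvalue_ge[OF \<beta> min] in auto)
  moreover have "m \<le> V_form w w / energy \<beta> w w'"
    using min[OF w(1)] energy_pos_if_V_form_neg[OF \<beta> w] by (simp add: excess_def pos_le_divide_eq)
  ultimately show ?thesis using m ev by auto
qed

end

section \<open>A plateau-shaped trial function\<close>

text \<open>Equal to \<open>1\<close> on \<open>[-R, R]\<close>, to \<open>0\<close> outside \<open>[-R-b, R+b]\<close>, and linear in between.\<close>
definition plateau :: "real \<Rightarrow> real \<Rightarrow> real \<Rightarrow> real" where
  "plateau R b x = 1 - (1/b) * max 0 (min x (R+b) - R) - (1/b) * max 0 (min (-x) (R+b) - R)"

definition plateau_deriv :: "real \<Rightarrow> real \<Rightarrow> real \<Rightarrow> real" where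
  "plateau_deriv R b t = (1/b) * indicator {-R-b<..<-R} t - (1/b) * indicator {R<..<R+b} t"

lemma interval_integral_indicator_Ioo:
  fixes a b p q :: real assumes ab: "a \<le> b"
  shows "(LBINT t=a..b. indicator {p<..<q} t) = max 0 (min b q - max a p)"
proof -
  have "(LBINT t=a..b. indicator {p<..<q} t) = L2_inner (indicator {a<..<b}) (indicator {p<..<q})"
    by (rule interval_integral_eq_L2_inner[OF ab])
  also have "\<dots> = (\<integral>x. indicator {max a p<..<min b q} x \<partial>lborel)" unfolding L2_inner_def
    by (rule Bochner_Integration.integral_cong) (auto simp: indicator_def)
  also have "\<dots> = max 0 (min b q - max a p)"
  proof (cases "max a p \<le> min b q")
    case True
    then show ?thesis using measure_lborel_Ioo[OF True] by simp
  next
    case False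
    then have "{max a p<..<min b q} = {}" by auto
    with False show ?thesis by simp
  qed
  finally show ?thesis .
qed

lemma plateau_eq_integral:
  assumes R: "R > 0" and b: "b > 0"
  shows "plateau R b x = 1 + (LBINT t=0..x. plateau_deriv R b t)"
proof -
  have lin: "(LBINT t=ereal c..ereal d. plateau_deriv R b t)
      = (1/b) * (LBINT t=ereal c..ereal d. indicator {-R-b<..<-R} t)
        - (1/b) * (LBINT t=ereal c..ereal d. indicator {R<..<R+b} t)" for c d
    unfolding plateau_deriv_def using L2_interval_integrable[OF L2_indicator_Ioo]
    by (subst interval_lebesgue_integral_diff(2))
      (auto intro: interval_lebesgue_integrable_mult_right)
  show ?thesis
  proof (cases "x \<ge> 0")
    case True
    then show ?thesis
      using interval_integral_indicator_Ioo[OF True, of "-R-b" "-R"]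
        interval_integral_indicator_Ioo[OF True, of R "R+b"] R b
      unfolding plateau_def zero_ereal_def lin by (simp add: min_def max_def)
  next
    case False
    then have x: "x \<le> 0" by simp
    have "(LBINT t=ereal 0..ereal x. plateau_deriv R b t) = - (LBINT t=ereal x..ereal 0. plateau_deriv R b t)"
      by (rule interval_integral_endpoints_reverse)
    then show ?thesis
      using interval_integral_indicator_Ioo[OF x, of "-R-b" "-R"]
        interval_integral_indicator_Ioo[OF x, of R "R+b"] x R b
      unfolding plateau_def zero_ereal_def lin by (simp add: min_def max_def)
  qed
qed

lemma plateau_eq_1: "\<bar>x\<bar> \<le> R \<Longrightarrow> plateau R b x = 1"
proof -
  assume "\<bar>x\<bar> \<le> R"
  then have "max 0 (min x (R+b) - R) = 0" "max 0 (min (-x) (R+b) - R) = 0"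
    by (auto simp: abs_le_iff max_def min_def)
  then show ?thesis by (simp add: plateau_def)
qed

lemma plateau_eq_0:
  assumes R: "R \<ge> 0" and b: "b > 0" and x: "\<bar>x\<bar> \<ge> R + b" shows "plateau R b x = 0"
proof (cases "x \<ge> 0")
  case True
  then have "max 0 (min x (R+b) - R) = b" "max 0 (min (-x) (R+b) - R) = 0"
    using R b x by (auto simp: max_def min_def)
  then show ?thesis using b by (simp add: plateau_def)
next
  case False
  then have "max 0 (min x (R+b) - R) = 0" "max 0 (min (-x) (R+b) - R) = b"
    using R b x by (auto simp: max_def min_def)
  then show ?thesis using b by (simp add: plateau_def)
qed

lemma plateau_bounds:
  assumes R: "R \<ge> 0" and b: "b > 0" shows "0 \<le> plateau R b x" "plateau R b x \<le> 1"
proof -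
  define T1 where "T1 = max 0 (min x (R+b) - R)"
  define T2 where "T2 = max 0 (min (-x) (R+b) - R)"
  have T: "0 \<le> T1" "T1 \<le> b" "0 \<le> T2" "T2 \<le> b" "T1 = 0 \<or> T2 = 0"
    unfolding T1_def T2_def using R b by (auto simp: min_def max_def)
  then have "(1/b) * T1 \<le> 1" "(1/b) * T2 \<le> 1" "0 \<le> (1/b) * T1" "0 \<le> (1/b) * T2"
    using b by (auto simp: field_simps)
  then show "0 \<le> plateau R b x" "plateau R b x \<le> 1"
    unfolding plateau_def T1_def[symmetric] T2_def[symmetric] using T(5) by auto
qed

lemma plateau_sq_le_indicator:
  assumes R: "R \<ge> 0" and b: "b > 0"
  shows "(plateau R b x)\<^sup>2 \<le> indicator {-(R+b)..R+b} x"
proof (cases "x \<in> {-(R+b)..R+b}")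
  case True
  then show ?thesis using plateau_bounds[OF R b, of x] by (simp add: power_le_one)
next
  case False
  then have "\<bar>x\<bar> \<ge> R + b" by auto
  then show ?thesis using plateau_eq_0[OF R b] False by simp
qed

lemma L2_plateau:
  assumes R: "R \<ge> 0" and b: "b > 0" shows "L2 (plateau R b)"
  unfolding L2_def
proof
  show "plateau R b \<in> borel_measurable lborel" unfolding plateau_def[abs_def] by measurable
  then show "integrable lborel (\<lambda>x. (plateau R b x)\<^sup>2)"
    using plateau_sq_le_indicator[OF R b]
    by (intro Bochner_Integration.integrable_bound[OF integrable_indicator_bounded[of "{-(R+b)..R+b}"]])
      auto
qed

lemma L2_plateau_deriv: "L2 (plateau_deriv R b)"
proof -
  have "L2 (\<lambda>t. (1/b) * indicator {-R-b<..<-R} t + (-(1/b)) * indicator {R<..<R+b} t)"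
    by (intro L2_lincomb L2_indicator_Ioo)
  moreover have "(\<lambda>t. (1/b) * indicator {-R-b<..<-R} t + (-(1/b)) * indicator {R<..<R+b} t) = plateau_deriv R b"
    unfolding plateau_deriv_def by (auto simp: fun_eq_iff)
  ultimately show ?thesis by simp
qed

lemma H1_plateau:
  assumes R: "R > 0" and b: "b > 0" shows "H1 (plateau R b) (plateau_deriv R b)"
proof (rule H1I[OF L2_plateau L2_plateau_deriv])
  show "plateau R b x = plateau R b 0 + (LBINT t=0..x. plateau_deriv R b t)" for x
    using plateau_eq_integral[OF R b, of x] plateau_eq_1[of 0 R b] R by simp
qed (use R b in auto)

lemma L2_inner_plateau_deriv:
  assumes R: "R > 0" and b: "b > 0"
  shows "L2_inner (plateau_deriv R b) (plateau_deriv R b) = 2 / b"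
proof -
  have "L2_inner (plateau_deriv R b) (plateau_deriv R b)
      = (\<integral>t. (1/b)\<^sup>2 * indicator {-R-b<..<-R} t + (1/b)\<^sup>2 * indicator {R<..<R+b} t \<partial>lborel)"
    unfolding L2_inner_def plateau_deriv_def
    by (rule Bochner_Integration.integral_cong) (use R b in \<open>auto simp: indicator_def power2_eq_square\<close>)
  also have "\<dots> = (1/b)\<^sup>2 * b + (1/b)\<^sup>2 * b"
    using integrable_indicator_bounded[of "{-R-b<..<-R}"] integrable_indicator_bounded[of "{R<..<R+b}"] b
    by simp
  also have "\<dots> = 2 / b" using b by (simp add: power2_eq_square field_simps)
  finally show ?thesis .
qed

lemma L2_inner_plateau_le:
  assumes R: "R \<ge> 0" and b: "b > 0" shows "L2_inner (plateau R b) (plateau R b) \<le> 2 * (R + b)"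
proof -
  have "L2_inner (plateau R b) (plateau R b) \<le> (\<integral>x. indicator {-(R+b)..R+b} x \<partial>lborel)"
    unfolding L2_inner_self
    using L2_plateau[OF R b] integrable_indicator_bounded[of "{-(R+b)..R+b}"] plateau_sq_le_indicator[OF R b]
    by (intro integral_mono) (auto simp: L2_def)
  also have "\<dots> = 2 * (R + b)" using R b by simp
  finally show ?thesis .
qed

context bounded_potential
begin

lemma V_form_plateau_le:
  assumes R: "R > 0" and b: "b > 0" and V_out: "AE x in lborel. \<bar>x\<bar> > R \<longrightarrow> V x \<le> 0"
  shows "V_form (plateau R b) (plateau R b) \<le> (LBINT x=-R..R. V x)"
proof -
  have "(LBINT x=-R..R. V x) = (\<integral>x. indicator {-R<..<R} x * V x \<partial>lborel)"
    using interval_integral_eq_L2_inner[of "-R" R V] R by (simp add: L2_inner_def)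
  moreover have "V_form (plateau R b) (plateau R b) \<le> (\<integral>x. indicator {-R<..<R} x * V x \<partial>lborel)"
    unfolding V_form_def
  proof (rule integral_mono_AE)
    show "integrable lborel (\<lambda>x. V x * plateau R b x * plateau R b x)"
      using integrable_V_form[OF L2_plateau L2_plateau] R b by simp
    show "integrable lborel (\<lambda>x. indicator {-R<..<R} x * V x)"
    proof (rule Bochner_Integration.integrable_bound)
      show "integrable lborel (\<lambda>x. C * indicator {-R<..<R} x)"
        using integrable_indicator_bounded[of "{-R<..<R}"] by simp
      show "AE x in lborel. norm (indicator {-R<..<R} x * V x) \<le> norm (C * indicator {-R<..<R} x)"
        using V_bounded by eventually_elim (use C_nonneg in \<open>auto simp: indicator_def\<close>)
    qed simp
    show "AE x in lborel. V x * plateau R b x * plateau R b x \<le> indicator {-R<..<R} x * V x"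
      using V_out AE_lborel_singleton[of R] AE_lborel_singleton[of "-R"]
    proof eventually_elim
      case (elim x)
      show ?case
      proof (cases "\<bar>x\<bar> < R")
        case True
        then have "plateau R b x = 1" "indicator {-R<..<R} x = (1::real)"
          using plateau_eq_1[of x R b] by (auto simp: abs_less_iff)
        then show ?thesis by simp
      next
        case False
        then have "V x \<le> 0" "indicator {-R<..<R} x = (0::real)"
          using elim by (auto simp: abs_if abs_less_iff split: if_splits)
        then show ?thesis by (simp add: mult_nonpos_nonneg mult.assoc)
      qed
    qed
  qed
  ultimately show ?thesis by simp
qed

end

section \<open>Blow-up of the lowest eigenvalue\<close>

lemma filterlim_inverse_sqrt_at_right_0: "filterlim (\<lambda>x::real. inverse (sqrt x)) at_top (at_right 0)"
proof (rule filterlim_compose[OF filterlim_inverse_at_top_right])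
  show "filterlim sqrt (at_right 0) (at_right (0::real))"
    unfolding filterlim_at
  proof
    show "\<forall>\<^sub>F x in at_right 0. sqrt x \<in> {0<..} \<and> sqrt x \<noteq> 0"
      by (simp add: eventually_at_filter)
    have "(sqrt \<longlongrightarrow> sqrt 0) (at_right 0)"
      by (rule tendsto_within_subset[OF isCont_real_sqrt[unfolded isCont_def]]) simp
    then show "(sqrt \<longlongrightarrow> 0) (at_right 0)" by simp
  qed
qed

context decaying_potential
begin

lemma negative_eigenvalue_and_mu1_le_plateau:
  assumes R: "R > 0" and V_out: "AE x in lborel. \<bar>x\<bar> > R \<longrightarrow> V x \<le> 0"
    and V_neg: "(LBINT x=-R..R. V x) < 0" and \<beta>: "\<beta> > 0" and b: "b > 0"
  shows "(\<exists>\<mu><0. K_eigenvalue V \<beta> \<mu>) \<and> mu1 V \<beta> \<le> (LBINT x=-R..R. V x) / (2 / b + \<beta> * (2 * (R + b)))"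
proof -
  let ?I = "LBINT x=-R..R. V x" and ?W = "plateau R b" and ?W' = "plateau_deriv R b"
  have W: "H1 ?W ?W'" by (rule H1_plateau[OF R b])
  have "V_form ?W ?W \<le> ?I" by (rule V_form_plateau_le[OF R b V_out])
  with V_neg have neg: "V_form ?W ?W < 0" by linarith
  have E: "0 < energy \<beta> ?W ?W'" "energy \<beta> ?W ?W' \<le> 2 / b + \<beta> * (2 * (R + b))"
    using energy_pos_if_V_form_neg[OF \<beta> W neg] L2_inner_plateau_le[of R b] R b \<beta>
    by (auto simp: energy_def L2_inner_plateau_deriv[OF R b])
  have "V_form ?W ?W / energy \<beta> ?W ?W' \<le> ?I / energy \<beta> ?W ?W'"
    using \<open>V_form ?W ?W \<le> ?I\<close> E(1) by (intro divide_right_mono) auto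
  also have "\<dots> \<le> ?I / (2 / b + \<beta> * (2 * (R + b)))"
    using V_neg E by (intro divide_left_mono_neg) auto
  finally show ?thesis using negative_eigenvalue_and_mu1_le[OF \<beta> W neg] by auto
qed

lemma mu1_le_inverse_sqrt:
  assumes R: "R > 0" and V_out: "AE x in lborel. \<bar>x\<bar> > R \<longrightarrow> V x \<le> 0"
    and V_neg: "(LBINT x=-R..R. V x) < 0" and \<beta>: "0 < \<beta>" "\<beta> < 1"
  shows "mu1 V \<beta> \<le> (LBINT x=-R..R. V x) / (4 + 2 * R) * inverse (sqrt \<beta>)"
proof -
  let ?I = "LBINT x=-R..R. V x"
  have s: "0 < sqrt \<beta>" "sqrt \<beta> * sqrt \<beta> = \<beta>" "\<beta> \<le> sqrt \<beta>"
    using \<beta> real_sqrt_le_1_iff[of \<beta>] mult_left_le[of "sqrt \<beta>" "sqrt \<beta>"] by auto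
  \<comment> \<open>\<open>b = 1 / sqrt \<beta>\<close> balances the two terms of the energy bound\<close>
  define B where "B = 2 / (1 / sqrt \<beta>) + \<beta> * (2 * (R + 1 / sqrt \<beta>))"
  have B: "B = 4 * sqrt \<beta> + 2 * R * \<beta>" unfolding B_def using s by (simp add: field_simps)
  have "0 < B" unfolding B using s(1) R \<beta> by (intro add_pos_pos mult_pos_pos) auto
  moreover have "B \<le> (4 + 2 * R) * sqrt \<beta>"
    unfolding B using mult_left_mono[OF s(3), of "2 * R"] R by (simp add: algebra_simps)
  ultimately have "?I / B \<le> ?I / ((4 + 2 * R) * sqrt \<beta>)"
    using V_neg s R by (intro divide_left_mono_neg mult_pos_pos) auto
  then show ?thesis
    using negative_eigenvalue_and_mu1_le_plateau[OF R V_out V_neg \<beta>(1), of "1 / sqrt \<beta>"] s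
    unfolding B_def by (simp add: divide_inverse mult_ac)
qed

lemma mu1_tendsto_at_bot:
  assumes R: "R > 0" and V_out: "AE x in lborel. \<bar>x\<bar> > R \<longrightarrow> V x \<le> 0"
    and V_neg: "(LBINT x=-R..R. V x) < 0"
  shows "filterlim (mu1 V) at_bot (at_right 0)"
  unfolding filterlim_at_bot
proof
  fix Z :: real
  let ?c = "(LBINT x=-R..R. V x) / (4 + 2 * R)"
  have "filterlim (\<lambda>\<beta>. ?c * inverse (sqrt \<beta>)) at_bot (at_right 0)"
    using V_neg R by (intro filterlim_tendsto_neg_mult_at_bot[OF tendsto_const _ filterlim_inverse_sqrt_at_right_0])
      (simp add: divide_neg_pos)
  then have "\<forall>\<^sub>F \<beta> in at_right 0. ?c * inverse (sqrt \<beta>) \<le> Z" by (simp add: filterlim_at_bot)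
  moreover have "\<forall>\<^sub>F \<beta> in at_right 0. 0 < \<beta> \<and> \<beta> < (1::real)"
    unfolding eventually_at_right_field by (intro exI[of _ 1]) auto
  ultimately show "\<forall>\<^sub>F \<beta> in at_right 0. mu1 V \<beta> \<le> Z"
    by eventually_elim (use mu1_le_inverse_sqrt[OF R V_out V_neg] in force)
qed

end

theorem lemma3p4:
  fixes V :: "real \<Rightarrow> real" and R :: real
  assumes R_pos: "R > 0"
    and V_meas: "V \<in> borel_measurable lborel"
    and V_Linf: "\<exists>C. AE x in lborel. \<bar>V x\<bar> \<le> C"
    and V_decay: "\<forall>\<epsilon>>0. \<exists>r. AE x in lborel. \<bar>x\<bar> > r \<longrightarrow> \<bar>V x\<bar> < \<epsilon>"
    and V_int_neg: "(LBINT x=-R..R. V x) < 0"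
    and V_nonpos_out: "AE x in lborel. \<bar>x\<bar> > R \<longrightarrow> V x \<le> 0"
  shows "(\<forall>\<beta>>0. \<exists>\<mu><0. K_eigenvalue V \<beta> \<mu>) \<and> filterlim (mu1 V) at_bot (at_right 0)"
proof -
  obtain C where "AE x in lborel. \<bar>V x\<bar> \<le> C" using V_Linf by blast
  then interpret decaying_potential V "\<bar>C\<bar>"
    using V_meas V_decay by unfold_locales (auto elim: eventually_mono)
  show ?thesis
    using negative_eigenvalue_and_mu1_le_plateau[OF R_pos V_nonpos_out V_int_neg _ zero_less_one]
      mu1_tendsto_at_bot[OF R_pos V_nonpos_out V_int_neg] by blast
qed

end
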